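(* Suppose that for every $i=1,\dots,N$ either ($F_i$ satisfies the Production Function Assumption (a) and $W_i$ satisfies the Labor Cost Assumption) or ($F_i$ satisfies the Production Function Assumption (b) and $W_i$ satisfies the Labor Cost and Growth Assumptions). Assume the net demand functions satisfy the Net Demand Assumption and that either the Market Viability Assumption or the Unbounded External Supply Assumption holds. Then there exists a competitive equilibrium $(\mathbf P^*,\mathcal Q^*,\mathbf E^*,\mathbf L^* )\in\mathbb R^N_{>0}\times\mathbb R^{N(N+2)}_{\ge0}$, and the equilibrium price vector $\mathbf P^*$ is unique. Moreover, if every $F_i$ is strictly concave and every $W_i$ is strictly convex, the competitive equilibrium is unique.
   Context: Economy with $N$ sectors; sector $i$ has production function $F_i:\mathbb R^{N+2}_{\ge0}\to\mathbb R_{\ge0}$ (inputs $(\mathbf q_i,E_i,L_i)$, $\mathbf q_i=(q_{ij})_{j=1}^N$), labor cost $W_i:\mathbb R_{\ge0}\to\mathbb R_{>0}$, net demand $D_i:\mathbb R_{\ge0}\to\mathbb R$; carbon price $P_E>0$ fixed. Profit $\Pi_i(\mathbf P,P_E,\mathbf q_i,E_i,L_i)=P_iF_i(\mathbf q_i,E_i,L_i)-\sum_jP_jq_{ij}-P_EE_i-W_i(L_i)$. Production Function Assumption: $F_i$ increasing in each argument, upper semi-continuous and concave, and either (a) $F_i(\mathbf x)=o(\|\mathbf x\|)$ as $\|\mathbf x\|\to\infty$, or (b) $F_i$ is homogeneous of degree one and $F_i(\mathbf q,E,L)\le c_iL$ for some $c_i<\infty$. Labor Cost Assumption: $W_i$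 strictly increasing, lower semi-continuous, convex. Growth Assumption: $\lim_{L\to\infty}W_i(L)/L=+\infty$. Net Demand Assumption: $D_i$ strictly decreasing and continuous on $\mathbb R_{>0}$, $\lim_{P\to0}D_i(P)=\infty$, $\lim_{P\to\infty}D_i(P)\le0$. Market Viability Assumption: there exist $(\overline{\mathcal Q},\overline{\mathbf E},\overline{\mathbf L})\in\mathbb R^{N(N+2)}_{\ge0}$ and $\overline{\mathbf P}\in\mathbb R^N_{>0}$ with $\overline P_iF_i(\overline{\mathbf q}_i,\overline E_i,\overline L_i)-\sum_j\overline P_j\overline q_{ij}>0$ for every $i$. Unbounded External Supply Assumption: $\lim_{P\to\infty}D_i(P)=-\infty$ for every $i$. Competitive equilibrium: $(\mathbf P^*,\mathcal Q^*,\mathbf E^*,\mathbf L^* )\in\mathbb R^N_{\ge0}\times\mathbb R^{N(N+2)}_{\ge0}$ such that for each $i$: (i) $F_i(\mathbf q_i^*,E_i^*,L_i^* )=D_i(P_i^* )+\sum_{j=1}^Nq^*_{ji}$; (ii) $(\mathbf q_i^*,E_i^*,L_i^* )$ maximizes $\Pi_i(\mathbf P^*,P_E,\cdot)$ over $\mathbb R^{N+2}_{\ge0}$. *)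

theory Defs
  imports "HOL-Analysis.Analysis"
begin

text \<open>Sectors are indexed by a finite type 'n (N = CARD('n)).
  Input bundle of sector i: (q_i, E_i, L_i) :: real^'n * real * real.\<close>

type_synonym 'n input = "(real^'n) \<times> real \<times> real"

definition input_dom :: "'n::finite input set" where
  "input_dom = {(q, E, L). (\<forall>j. 0 \<le> q $ j) \<and> 0 \<le> E \<and> 0 \<le> L}"

definition input_le :: "'n::finite input \<Rightarrow> 'n input \<Rightarrow> bool" where
  "input_le x y \<longleftrightarrow> (\<forall>j. fst x $ j \<le> fst y $ j) \<and>
      fst (snd x) \<le> fst (snd y) \<and> snd (snd x) \<le> snd (snd y)"

definition usc_on :: "'a::topological_space set \<Rightarrow> ('a \<Rightarrow> real) \<Rightarrow> bool" where
  "usc_on S f \<longleftrightarrow> (\<forall>a. openin (top_of_set S) {x \<in> S. f x < a})"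

definition lsc_on :: "'a::topological_space set \<Rightarrow> ('a \<Rightarrow> real) \<Rightarrow> bool" where
  "lsc_on S f \<longleftrightarrow> (\<forall>a. openin (top_of_set S) {x \<in> S. a < f x})"

definition strictly_concave_on :: "'a::real_vector set \<Rightarrow> ('a \<Rightarrow> real) \<Rightarrow> bool" where
  "strictly_concave_on S f \<longleftrightarrow> convex S \<and>
     (\<forall>x\<in>S. \<forall>y\<in>S. x \<noteq> y \<longrightarrow> (\<forall>t. 0 < t \<and> t < 1 \<longrightarrow>
        (1 - t) * f x + t * f y < f ((1 - t) *\<^sub>R x + t *\<^sub>R y)))"

definition strictly_convex_on :: "'a::real_vector set \<Rightarrow> ('a \<Rightarrow> real) \<Rightarrow> bool" where
  "strictly_convex_on S f \<longleftrightarrow> convex S \<and>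
     (\<forall>x\<in>S. \<forall>y\<in>S. x \<noteq> y \<longrightarrow> (\<forall>t. 0 < t \<and> t < 1 \<longrightarrow>
        f ((1 - t) *\<^sub>R x + t *\<^sub>R y) < (1 - t) * f x + t * f y))"

definition prod_common :: "('n::finite input \<Rightarrow> real) \<Rightarrow> bool" where
  "prod_common F \<longleftrightarrow>
     (\<forall>x\<in>input_dom. \<forall>y\<in>input_dom. input_le x y \<longrightarrow> F x \<le> F y) \<and>
     usc_on input_dom F \<and> concave_on input_dom F"

definition prod_assm_a :: "('n::finite input \<Rightarrow> real) \<Rightarrow> bool" where
  "prod_assm_a F \<longleftrightarrow> prod_common F \<and>
     (\<forall>\<epsilon>>0. \<exists>R. \<forall>x\<in>input_dom. R \<le> norm x \<longrightarrow> \<bar>F x\<bar> \<le> \<epsilon> * norm x)"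

definition prod_assm_b :: "('n::finite input \<Rightarrow> real) \<Rightarrow> bool" where
  "prod_assm_b F \<longleftrightarrow> prod_common F \<and>
     (\<forall>x\<in>input_dom. \<forall>t>0. F (t *\<^sub>R x) = t * F x) \<and>
     (\<exists>c. \<forall>q E L. (q, E, L) \<in> input_dom \<longrightarrow> F (q, E, L) \<le> c * L)"

definition labor_assm :: "(real \<Rightarrow> real) \<Rightarrow> bool" where
  "labor_assm W \<longleftrightarrow> strict_mono_on {0..} W \<and> lsc_on {0..} W \<and> convex_on {0..} W"

definition growth_assm :: "(real \<Rightarrow> real) \<Rightarrow> bool" where
  "growth_assm W \<longleftrightarrow> filterlim (\<lambda>L. W L / L) at_top at_top"

text \<open>Net Demand Assumption. lim_{P->oo} D(P) <= 0 is written as: D eventually lies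
  below every positive epsilon (the limit exists in [-oo,oo) by monotonicity).\<close>
definition demand_assm :: "(real \<Rightarrow> real) \<Rightarrow> bool" where
  "demand_assm D \<longleftrightarrow>
     (\<forall>x>0. \<forall>y>0. x < y \<longrightarrow> D y < D x) \<and>
     continuous_on {0<..} D \<and>
     filterlim D at_top (at_right 0) \<and>
     (\<forall>\<epsilon>>0. eventually (\<lambda>P. D P < \<epsilon>) at_top)"

definition profit ::
  "('n::finite \<Rightarrow> 'n input \<Rightarrow> real) \<Rightarrow> ('n \<Rightarrow> real \<Rightarrow> real) \<Rightarrow> 'n \<Rightarrow> real^'n \<Rightarrow> real
     \<Rightarrow> real^'n \<Rightarrow> real \<Rightarrow> real \<Rightarrow> real" where
  "profit F W i P PE q E L =
     P $ i * F i (q, E, L) - (\<Sum>j\<in>UNIV. P $ j * q $ j) - PE * E - W i L"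

text \<open>Market Viability Assumption; Q $ i $ j = q_ij.\<close>
definition market_viability ::
  "('n::finite \<Rightarrow> 'n input \<Rightarrow> real) \<Rightarrow> bool" where
  "market_viability F \<longleftrightarrow>
     (\<exists>(Q::real^'n^'n) (E::real^'n) (L::real^'n) (P::real^'n).
        (\<forall>i j. 0 \<le> Q $ i $ j) \<and> (\<forall>i. 0 \<le> E $ i) \<and> (\<forall>i. 0 \<le> L $ i) \<and>
        (\<forall>i. 0 < P $ i) \<and>
        (\<forall>i. P $ i * F i (Q $ i, E $ i, L $ i) - (\<Sum>j\<in>UNIV. P $ j * Q $ i $ j) > 0))"

definition unbounded_external_supply :: "('n \<Rightarrow> real \<Rightarrow> real) \<Rightarrow> bool" where
  "unbounded_external_supply D \<longleftrightarrow> (\<forall>i. filterlim (D i) at_bot at_top)"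

definition competitive_equilibrium ::
  "('n::finite \<Rightarrow> 'n input \<Rightarrow> real) \<Rightarrow> ('n \<Rightarrow> real \<Rightarrow> real) \<Rightarrow> ('n \<Rightarrow> real \<Rightarrow> real)
     \<Rightarrow> real \<Rightarrow> real^'n \<Rightarrow> real^'n^'n \<Rightarrow> real^'n \<Rightarrow> real^'n \<Rightarrow> bool" where
  "competitive_equilibrium F W D PE P Q E L \<longleftrightarrow>
     (\<forall>i. 0 \<le> P $ i) \<and> (\<forall>i j. 0 \<le> Q $ i $ j) \<and> (\<forall>i. 0 \<le> E $ i) \<and> (\<forall>i. 0 \<le> L $ i) \<and>
     (\<forall>i. F i (Q $ i, E $ i, L $ i) = D i (P $ i) + (\<Sum>j\<in>UNIV. Q $ j $ i)) \<and>
     (\<forall>i. \<forall>q E' L'. (q, E', L') \<in> input_dom \<longrightarrow>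
          profit F W i P PE q E' L' \<le> profit F W i P PE (Q $ i) (E $ i) (L $ i))"

end

theory Submission
  imports Defs
begin

text \<open>
  On the open positive orthant of prices, the maximal profit of each firm is a supremum of functions
  affine in the prices, hence convex, and the net supply of every profit-maximizing allocation is a
  subgradient of the total maximal profit.  Subtracting the primitives of the decreasing demand
  functions yields a convex potential whose subgradients at a price vector are the excess supplies
  of optimal allocations, so equilibrium prices are exactly the points where 0 is such a
  subgradient.  Market viability, or unbounded external supply, makes the potential large at high
  prices; since supply stays bounded while demand explodes as a relative price tends to 0, raising a
  very low price lowers the potential.  Hence the potential attains its minimum over a suitable box
  in the interior, and there the convex and closed set of optimal net supplies contains market
  demand, by a separating hyperplane argument.  Prices are unique because supply is monotone in
  prices while demand is strictly decreasing; strict concavity of production makes each firm's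
  optimal input bundle unique.
\<close>

definition seq_usc_on :: "'a::topological_space set \<Rightarrow> ('a \<Rightarrow> real) \<Rightarrow> bool" where
  "seq_usc_on S g \<longleftrightarrow> (\<forall>x l c. (\<forall>n. x n \<in> S) \<longrightarrow> x \<longlonglongrightarrow> l \<longrightarrow> l \<in> S \<longrightarrow> g l < c \<longrightarrow>
     eventually (\<lambda>n. g (x n) < c) sequentially)"

lemma seq_usc_onD:
  "seq_usc_on S g \<Longrightarrow> (\<And>n. x n \<in> S) \<Longrightarrow> x \<longlonglongrightarrow> l \<Longrightarrow> l \<in> S \<Longrightarrow> g l < c \<Longrightarrow>
    eventually (\<lambda>n. g (x n) < c) sequentially"
  unfolding seq_usc_on_def by blast

lemma usc_on_imp_seq_usc_on:
  assumes "usc_on S f"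
  shows "seq_usc_on S f"
  unfolding seq_usc_on_def
proof (intro allI impI)
  fix x l c
  assume x: "\<forall>n. x n \<in> S" "x \<longlonglongrightarrow> l" and l: "l \<in> S" "f l < c"
  obtain U where U: "open U" "{y \<in> S. f y < c} = S \<inter> U"
    using assms unfolding usc_on_def openin_open by blast
  have "l \<in> U" using U(2) l by blast
  from topological_tendstoD[OF x(2) U(1) this]
  show "eventually (\<lambda>n. f (x n) < c) sequentially"
    by eventually_elim (use U(2) x(1) in blast)
qed

lemma lsc_on_eventually_greater:
  assumes "lsc_on S f" "\<And>n. x n \<in> S" "x \<longlonglongrightarrow> l" "l \<in> S" "c < f l"
  shows "eventually (\<lambda>n. c < f (x n)) sequentially"
proof -
  obtain U where U: "open U" "{y \<in> S. c < f y} = S \<inter> U"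
    using assms(1) unfolding lsc_on_def openin_open by blast
  have "l \<in> U" using U(2) assms(4,5) by blast
  from topological_tendstoD[OF assms(3) U(1) this] show ?thesis
    by eventually_elim (use U(2) assms(2) in blast)
qed

lemma eventually_mult_less:
  fixes a b :: "nat \<Rightarrow> real"
  assumes a: "a \<longlonglongrightarrow> a0" "0 \<le> a0"
    and b: "\<And>n. 0 \<le> b n" "0 \<le> b0" "\<And>d. b0 < d \<Longrightarrow> eventually (\<lambda>n. b n < d) sequentially"
    and c: "a0 * b0 < c"
  shows "eventually (\<lambda>n. a n * b n < c) sequentially"
proof -
  define \<eta> where "\<eta> = min 1 ((c - a0 * b0) / (a0 + b0 + 2))"
  have \<eta>: "0 < \<eta>" "\<eta> \<le> 1" using a b c by (simp_all add: \<eta>_def)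
  have "\<eta> * (a0 + b0 + 1) < c - a0 * b0"
  proof -
    have "\<eta> * (a0 + b0 + 1) \<le> (c - a0 * b0) / (a0 + b0 + 2) * (a0 + b0 + 1)"
      using a b by (intro mult_right_mono) (simp_all add: \<eta>_def)
    also have "\<dots> < c - a0 * b0"
      using a b c by (simp add: field_simps)
    finally show ?thesis .
  qed
  moreover have "\<eta> * \<eta> \<le> \<eta>" using \<eta> by (simp add: mult_le_cancel_left1)
  ultimately have small: "(a0 + \<eta>) * (b0 + \<eta>) < c"
    by (simp add: algebra_simps)
  have "eventually (\<lambda>n. a n < a0 + \<eta>) sequentially"
    using order_tendstoD(2)[OF a(1)] \<eta> by simp
  moreover have "eventually (\<lambda>n. b n < b0 + \<eta>) sequentially"
    using b(3) \<eta> by simp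
  ultimately show ?thesis
  proof eventually_elim
    case (elim n)
    have "a n * b n \<le> max 0 (a n) * b n"
      using b(1)[of n] by (intro mult_right_mono) simp_all
    also have "\<dots> \<le> (a0 + \<eta>) * (b0 + \<eta>)"
      using elim a(2) b(1)[of n] \<eta> by (intro mult_mono) simp_all
    finally show ?case using small by simp
  qed
qed

lemma seq_usc_on_compact_bdd_above:
  fixes g :: "'a::metric_space \<Rightarrow> real"
  assumes "compact T" "seq_usc_on T g"
  shows "bdd_above (g ` T)"
proof (rule ccontr)
  assume "\<not> bdd_above (g ` T)"
  then have "\<forall>n::nat. \<exists>x\<in>T. real n < g x"
    by (meson bdd_above.I2 not_le)
  then obtain x where x: "\<And>n. x n \<in> T" "\<And>n. real n < g (x n)" by metis
  obtain l r where r: "l \<in> T" "strict_mono r" "(x \<circ> r) \<longlonglongrightarrow> l"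
    using assms(1) x(1) unfolding compact_eq_seq_compact_metric seq_compact_def by meson
  have "eventually (\<lambda>n. g ((x \<circ> r) n) < g l + 1) sequentially"
    by (rule seq_usc_onD[OF assms(2)]) (use r x(1) in \<open>auto simp: comp_def\<close>)
  moreover have "eventually (\<lambda>n. g l + 1 \<le> real n) sequentially"
    using filterlim_real_sequentially unfolding filterlim_at_top by blast
  ultimately have "eventually (\<lambda>n. False) sequentially"
  proof eventually_elim
    case (elim n)
    moreover have "real n \<le> real (r n)" using seq_suble[OF r(2)] by simp
    moreover note x(2)[of "r n"]
    ultimately show False by simp
  qed
  then show False by simp
qed

lemma seq_usc_on_compact_attains_max:
  fixes g :: "'a::metric_space \<Rightarrow> real"
  assumes "compact T" "T \<noteq> {}" "seq_usc_on T g"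
  shows "\<exists>x\<in>T. \<forall>y\<in>T. g y \<le> g x"
proof -
  define M where "M = Sup (g ` T)"
  have bdd: "bdd_above (g ` T)" using seq_usc_on_compact_bdd_above[OF assms(1,3)] .
  have le_M: "g y \<le> M" if "y \<in> T" for y
    unfolding M_def using bdd that by (simp add: cSup_upper)
  have "\<exists>x\<in>T. M + - inverse (real (Suc n)) < g x" for n
    using less_cSup_iff[of "g ` T" "M + - inverse (real (Suc n))"] bdd assms(2)
    unfolding M_def by simp
  then obtain x where x: "\<And>n. x n \<in> T" "\<And>n. M + - inverse (real (Suc n)) < g (x n)" by metis
  obtain l r where r: "l \<in> T" "strict_mono r" "(x \<circ> r) \<longlonglongrightarrow> l"
    using assms(1) x(1) unfolding compact_eq_seq_compact_metric seq_compact_def by meson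
  have "(\<lambda>n. g (x n)) \<longlonglongrightarrow> M"
    by (rule tendsto_sandwich[OF _ _ LIMSEQ_inverse_real_of_nat_add_minus tendsto_const])
      (use x le_M in \<open>auto intro: less_imp_le always_eventually\<close>)
  then have lim: "(\<lambda>n. g (x (r n))) \<longlonglongrightarrow> M"
    using LIMSEQ_subseq_LIMSEQ[OF _ r(2)] by (auto simp: comp_def)
  have "M \<le> g l"
  proof (rule ccontr)
    assume "\<not> M \<le> g l"
    have "eventually (\<lambda>n. g ((x \<circ> r) n) < (g l + M) / 2) sequentially"
      by (rule seq_usc_onD[OF assms(3)]) (use r x(1) \<open>\<not> M \<le> g l\<close> in \<open>auto simp: comp_def\<close>)
    moreover have "eventually (\<lambda>n. (g l + M) / 2 < g (x (r n))) sequentially"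
      using order_tendstoD(1)[OF lim, of "(g l + M) / 2"] \<open>\<not> M \<le> g l\<close> by simp
    ultimately have "eventually (\<lambda>n. False) sequentially"
      by eventually_elim simp
    then show False by simp
  qed
  then show ?thesis using le_M r(1) by force
qed

lemma scaled_null_sequence:
  fixes u :: "real^'n::finite"
  assumes "0 < \<delta>"
  obtains t :: "nat \<Rightarrow> real" where "\<And>n. 0 < t n" "t \<longlonglongrightarrow> 0" "\<And>n. \<forall>k. \<bar>t n * u $ k\<bar> < \<delta>"
proof -
  have nu: "0 < 1 + norm u" by (simp add: add_pos_nonneg)
  define s where "s = \<delta> / (1 + norm u)"
  have s: "0 < s" "s * norm u < \<delta>"
    using assms nu by (simp_all add: s_def field_simps)
  define t where "t n = s * inverse (real (Suc n))" for n
  have t_pos: "0 < t n" for n using s(1) by (simp add: t_def)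
  have "t n * \<bar>u $ k\<bar> \<le> s * norm u" for n k
    unfolding t_def using s(1) component_le_norm_cart[of u k]
    by (intro mult_mono mult_left_le) (simp_all add: inverse_le_1_iff)
  then have "\<forall>k. \<bar>t n * u $ k\<bar> < \<delta>" for n
    using s(2) t_pos[of n] by (simp add: abs_mult) (meson le_less_trans)
  moreover have "t \<longlonglongrightarrow> 0"
    unfolding t_def by (rule tendsto_mult_right_zero[OF LIMSEQ_inverse_real_of_nat])
  ultimately show ?thesis using that t_pos by blast
qed

lemma integral_decreasing_le_tangent:
  fixes f :: "real \<Rightarrow> real"
  assumes cont: "continuous_on {c..} f"
    and dec: "\<And>x y. c \<le> x \<Longrightarrow> x \<le> y \<Longrightarrow> f y \<le> f x"
    and "c \<le> p" "c \<le> q"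
  shows "integral {c..p} f \<le> integral {c..q} f + f q * (p - q)"
proof -
  have int: "f integrable_on {s..t}" if "c \<le> s" for s t
    by (rule integrable_continuous_real, rule continuous_on_subset[OF cont]) (use that in auto)
  have split: "integral {c..t} f = integral {c..s} f + integral {s..t} f" if "s \<le> t" "c \<le> s" for s t
    using Henstock_Kurzweil_Integration.integral_combine[OF that(2,1) int] by simp
  show ?thesis
  proof (cases "q \<le> p")
    case True
    have "integral {q..p} f \<le> integral {q..p} (\<lambda>_. f q)"
      using int[of q p] assms True by (intro integral_le) auto
    then show ?thesis using split[OF True \<open>c \<le> q\<close>] True by (simp add: mult.commute)
  next
    case False
    have "integral {p..q} (\<lambda>_. f q) \<le> integral {p..q} f"
      using int[of p q] assms False by (intro integral_le) auto
    then show ?thesis using split[of p q] False \<open>c \<le> p\<close> by (simp add: algebra_simps)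
  qed
qed

lemma mem_input_dom [simp]: "(q, E, L) \<in> input_dom \<longleftrightarrow> (\<forall>j. 0 \<le> q $ j) \<and> 0 \<le> E \<and> 0 \<le> L"
  by (simp add: input_dom_def)

lemma labor_input_nonneg: "x \<in> input_dom \<Longrightarrow> 0 \<le> snd (snd x)"
  by (cases x) simp

lemma closed_input_dom: "closed (input_dom :: 'n::finite input set)"
proof -
  have "input_dom = {x::'n input. \<forall>j. 0 \<le> fst x $ j} \<inter> {x. 0 \<le> fst (snd x)} \<inter> {x. 0 \<le> snd (snd x)}"
    by (auto simp: input_dom_def)
  moreover have "closed {x::'n input. \<forall>j. 0 \<le> fst x $ j}"
    by (intro closed_Collect_all closed_Collect_le continuous_intros)
  moreover have "closed {x::'n input. 0 \<le> fst (snd x)}" "closed {x::'n input. 0 \<le> snd (snd x)}"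
    by (intro closed_Collect_le continuous_intros)+
  ultimately show ?thesis by (metis closed_Int)
qed

lemma convex_input_dom: "convex (input_dom :: 'n::finite input set)"
  unfolding convex_def input_dom_def by (auto intro!: add_nonneg_nonneg mult_nonneg_nonneg)

lemma norm_input_le_sum:
  assumes "(q, E, L) \<in> input_dom"
  shows "norm (q, E, L) \<le> (\<Sum>j\<in>UNIV. q $ j) + E + L"
proof -
  have "norm (q, E, L) \<le> norm q + (norm E + norm L)"
    by (meson add_left_mono norm_Pair_le order_trans)
  moreover have "norm q \<le> (\<Sum>j\<in>UNIV. q $ j)"
    using norm_le_l1_cart[of q] assms by simp
  ultimately show ?thesis using assms by simp
qed

lemma norm_input_le_weighted:
  assumes "(q, E, L) \<in> input_dom" "0 \<le> c" "c \<le> a" "c \<le> b" "c \<le> d"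
  shows "c * norm (q, E, L) \<le> a * (\<Sum>j\<in>UNIV. q $ j) + b * E + d * L"
proof -
  have "c * norm (q, E, L) \<le> c * (\<Sum>j\<in>UNIV. q $ j) + c * E + c * L"
    using mult_left_mono[OF norm_input_le_sum[OF assms(1)] assms(2)] by (simp add: distrib_left)
  also have "\<dots> \<le> a * (\<Sum>j\<in>UNIV. q $ j) + b * E + d * L"
    using assms by (intro add_mono mult_right_mono) (simp_all add: sum_nonneg)
  finally show ?thesis .
qed

lemma component_le_norm_input:
  fixes q :: "real^'n::finite"
  shows "\<bar>q $ j\<bar> \<le> norm (q, E, L)" "\<bar>E\<bar> \<le> norm (q, E, L)" "\<bar>L\<bar> \<le> norm (q, E, L)"
  using component_le_norm_cart[of q j] norm_fst_le[of q "(E, L)"] norm_snd_le[of "(E, L)" q]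
    norm_fst_le[of E L] norm_snd_le[of L E] by simp_all

definition pos_orthant :: "(real^'n::finite) set" where
  "pos_orthant = {P. \<forall>k. 0 < P $ k}"

lemma open_pos_orthant: "open (pos_orthant :: (real^'n::finite) set)"
proof -
  have "pos_orthant = (\<Inter>k. {P::real^'n. 0 < P $ k})" by (auto simp: pos_orthant_def)
  moreover have "open (\<Inter>k. {P::real^'n. 0 < P $ k})"
    using open_halfspace_component_gt_cart by (intro open_INT) auto
  ultimately show ?thesis by simp
qed

lemma convex_pos_orthant: "convex pos_orthant"
  unfolding convex_def pos_orthant_def
  by (auto intro: add_pos_nonneg add_nonneg_pos simp: order.order_iff_strict)

lemma pos_orthant_bounds:
  assumes "P \<in> pos_orthant"
  obtains a B where "0 < a" "a \<le> B" "\<And>k. a \<le> P $ k \<and> P $ k \<le> B"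
proof
  show "0 < Min (range (\<lambda>k. P $ k))" using assms by (auto simp: pos_orthant_def)
  show "Min (range (\<lambda>k. P $ k)) \<le> P $ k \<and> P $ k \<le> Max (range (\<lambda>k. P $ k))" for k by simp
  then show "Min (range (\<lambda>k. P $ k)) \<le> Max (range (\<lambda>k. P $ k))" by (meson order_trans)
qed

type_synonym 'n alloc = "(real^'n^'n) \<times> (real^'n) \<times> (real^'n)"

definition firm_inputs :: "'n::finite alloc \<Rightarrow> 'n \<Rightarrow> 'n input" where
  "firm_inputs X i = (fst X $ i, fst (snd X) $ i, snd (snd X) $ i)"

lemma firm_inputs_tendsto: "Xn \<longlonglongrightarrow> X \<Longrightarrow> (\<lambda>n. firm_inputs (Xn n) i) \<longlonglongrightarrow> firm_inputs X i"
  unfolding firm_inputs_def by (intro tendsto_intros)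

lemma firm_inputs_add_scaleR:
  "firm_inputs (u *\<^sub>R X + v *\<^sub>R Y) i = u *\<^sub>R firm_inputs X i + v *\<^sub>R firm_inputs Y i"
  by (simp add: firm_inputs_def)

lemma norm_alloc_le_sum_firm_inputs:
  "norm (X :: 'n::finite alloc) \<le> 3 * (\<Sum>i\<in>UNIV. norm (firm_inputs X i))"
proof -
  obtain Q E L where X: "X = (Q, E, L)" by (cases X)
  have "norm Q \<le> (\<Sum>i\<in>UNIV. norm (Q $ i))"
    unfolding norm_vec_def by (rule L2_set_le_sum) simp
  also have "\<dots> \<le> (\<Sum>i\<in>UNIV. norm (firm_inputs X i))"
    by (rule sum_mono) (simp add: X firm_inputs_def norm_fst_le)
  finally have "norm Q \<le> (\<Sum>i\<in>UNIV. norm (firm_inputs X i))" .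
  moreover have "norm E \<le> (\<Sum>i\<in>UNIV. norm (firm_inputs X i))"
    and "norm L \<le> (\<Sum>i\<in>UNIV. norm (firm_inputs X i))"
    by (rule order_trans[OF norm_le_l1_cart sum_mono],
        simp add: X firm_inputs_def component_le_norm_input)+
  moreover have "norm X \<le> norm Q + (norm E + norm L)"
    unfolding X by (meson add_left_mono norm_Pair_le order_trans)
  ultimately show ?thesis by linarith
qed

lemma firm_inputs_eq_iff: "(\<forall>i. firm_inputs X i = firm_inputs Y i) \<longleftrightarrow> X = Y"
  by (cases X, cases Y) (auto simp: firm_inputs_def vec_eq_iff)

lemma labor_assm_linear_lower_bound:
  assumes "labor_assm W"
  obtains m where "0 < m" "\<And>L. 0 \<le> L \<Longrightarrow> W 0 + m * (L - 1) \<le> W L"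
proof
  have W_less: "W x < W y" if "0 \<le> x" "x < y" for x y
    using assms that unfolding labor_assm_def strict_mono_on_def by simp
  show "0 < W 1 - W 0" using W_less[of 0 1] by simp
  fix L :: real assume L: "0 \<le> L"
  show "W 0 + (W 1 - W 0) * (L - 1) \<le> W L"
  proof (cases "1 \<le> L")
    case True
    have "W 1 \<le> (1 - 1/L) * W 0 + (1/L) * W L"
      using convex_onD[of "{0..}" W "1/L" 0 L] assms True by (simp add: labor_assm_def)
    then show ?thesis using True W_less[of 0 1] by (simp add: field_simps)
  next
    case False
    have "(W 1 - W 0) * (L - 1) \<le> 0"
      using W_less[of 0 1] False by (intro mult_nonneg_nonpos) simp_all
    moreover have "W 0 \<le> W L" using W_less[of 0 L] L by (cases "L = 0") simp_all
    ultimately show ?thesis by linarith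
  qed
qed

lemma prod_assm_a_affine_bound:
  fixes F :: "'n::finite input \<Rightarrow> real"
  assumes "prod_assm_a F" "\<And>x. x \<in> input_dom \<Longrightarrow> 0 \<le> F x" "0 < e"
  obtains C where "\<And>x. x \<in> input_dom \<Longrightarrow> F x \<le> e * norm x + C"
proof -
  obtain R where R: "\<And>x. x \<in> input_dom \<Longrightarrow> R \<le> norm x \<Longrightarrow> \<bar>F x\<bar> \<le> e * norm x"
    using assms(1,3) unfolding prod_assm_a_def by blast
  define r where "r = max R 0"
  define top :: "'n input" where "top = (\<chi> j. r, r, r)"
  have top: "top \<in> input_dom" by (simp add: top_def r_def)
  have "F x \<le> e * norm x + F top" if x: "x \<in> input_dom" for x
  proof (cases "R \<le> norm x")
    case True
    then show ?thesis using R[OF x] assms(2)[OF top] by linarith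
  next
    case False
    obtain q E L where xe: "x = (q, E, L)" by (cases x)
    have nx: "norm (q, E, L) \<le> r" using False max.cobounded1[of R 0] xe unfolding r_def by simp
    have "\<bar>q $ j\<bar> \<le> r" "\<bar>E\<bar> \<le> r" "\<bar>L\<bar> \<le> r" for j
      by (intro order_trans[OF _ nx] component_le_norm_input)+
    then have "input_le x top" unfolding input_le_def top_def xe by (simp add: abs_le_iff)
    then have "F x \<le> F top"
      using assms(1) x top unfolding prod_assm_a_def prod_common_def by blast
    then show ?thesis using assms(3) by (simp add: add_increasing)
  qed
  then show ?thesis using that by blast
qed

lemma prod_assm_b_labor_bound:
  assumes "prod_assm_b F"
  obtains C where "0 \<le> C" "\<And>q E L. (q, E, L) \<in> input_dom \<Longrightarrow> F (q, E, L) \<le> C * L"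
proof -
  obtain C where C: "\<And>q E L. (q, E, L) \<in> input_dom \<Longrightarrow> F (q, E, L) \<le> C * L"
    using assms unfolding prod_assm_b_def by blast
  have "F (q, E, L) \<le> max C 0 * L" if "(q, E, L) \<in> input_dom" for q E L
    using C[OF that] mult_right_mono[of C "max C 0" L] that by simp
  then show ?thesis using that[of "max C 0"] by simp
qed

lemma growth_assm_eventually_ge_linear:
  assumes "growth_assm W"
  obtains L0 where "\<And>L. L0 \<le> L \<Longrightarrow> M * L \<le> W L"
proof -
  have "eventually (\<lambda>L. M \<le> W L / L) at_top"
    using assms unfolding growth_assm_def filterlim_at_top by blast
  then have "eventually (\<lambda>L. M \<le> W L / L \<and> 0 < L) at_top"
    using eventually_gt_at_top by (rule eventually_conj)
  then obtain L0 where L0: "\<And>L. L0 \<le> L \<Longrightarrow> M \<le> W L / L \<and> 0 < L"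
    unfolding eventually_at_top_linorder by blast
  then show ?thesis using that by (metis pos_le_divide_eq)
qed

section \<open>Profit maximization\<close>

locale economy =
  fixes F :: "'n::finite \<Rightarrow> 'n input \<Rightarrow> real"
    and W :: "'n \<Rightarrow> real \<Rightarrow> real"
    and D :: "'n \<Rightarrow> real \<Rightarrow> real"
    and PE :: real
  assumes PE_pos: "0 < PE"
    and F_nonneg: "\<And>i x. x \<in> input_dom \<Longrightarrow> 0 \<le> F i x"
    and W_pos: "\<And>i L. 0 \<le> L \<Longrightarrow> 0 < W i L"
    and prod_labor: "\<And>i. (prod_assm_a (F i) \<and> labor_assm (W i)) \<or>
                         (prod_assm_b (F i) \<and> labor_assm (W i) \<and> growth_assm (W i))"
    and demand: "\<And>i. demand_assm (D i)"
begin

lemma labor_assm_W: "labor_assm (W i)"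
  using prod_labor[of i] by blast

lemma prod_common_F: "prod_common (F i)"
  using prod_labor[of i] unfolding prod_assm_a_def prod_assm_b_def by blast

lemma F_usc: "usc_on input_dom (F i)"
  using prod_common_F unfolding prod_common_def by blast

lemma F_concave: "concave_on input_dom (F i)"
  using prod_common_F unfolding prod_common_def by blast

lemma W_less: "0 \<le> x \<Longrightarrow> x < y \<Longrightarrow> W i x < W i y"
  using labor_assm_W unfolding labor_assm_def strict_mono_on_def by simp

lemma W_mono: "0 \<le> x \<Longrightarrow> x \<le> y \<Longrightarrow> W i x \<le> W i y"
  using W_less[of x y i] by (cases "x = y") simp_all

lemma W_convex: "convex_on {0..} (W i)"
  using labor_assm_W unfolding labor_assm_def by blast

lemma W_lsc: "lsc_on {0..} (W i)"
  using labor_assm_W unfolding labor_assm_def by blast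

lemma D_less: "0 < x \<Longrightarrow> x < y \<Longrightarrow> D k y < D k x"
  using demand[of k] unfolding demand_assm_def by simp

lemma D_mono: "0 < x \<Longrightarrow> x \<le> y \<Longrightarrow> D k y \<le> D k x"
  using D_less[of x y k] by (cases "x = y") simp_all

lemma D_cont: "continuous_on {0<..} (D k)"
  using demand[of k] unfolding demand_assm_def by blast

definition input_cost :: "real^'n \<Rightarrow> 'n input \<Rightarrow> real" where
  "input_cost P x = (\<Sum>j\<in>UNIV. P $ j * fst x $ j) + PE * fst (snd x)"

definition firm_profit :: "'n \<Rightarrow> real^'n \<Rightarrow> 'n input \<Rightarrow> real" where
  "firm_profit i P x = P $ i * F i x - input_cost P x - W i (snd (snd x))"

lemma firm_profit_Pair:
  "firm_profit i P (q, E, L) = P $ i * F i (q, E, L) - (\<Sum>j\<in>UNIV. P $ j * q $ j) - PE * E - W i L"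
  by (simp add: firm_profit_def input_cost_def)

lemma profit_eq_firm_profit: "profit F W i P PE q E L = firm_profit i P (q, E, L)"
  by (simp add: firm_profit_Pair profit_def)

lemma firm_profit_zero_ge: "0 \<le> P $ i \<Longrightarrow> - W i 0 \<le> firm_profit i P (0, 0, 0)"
  using F_nonneg[of "(0, 0, 0)" i] by (simp add: firm_profit_Pair)

lemma firm_profit_le_price_bounds:
  assumes "(q, E, L) \<in> input_dom" "\<forall>k. a \<le> P $ k \<and> P $ k \<le> B"
  shows "firm_profit i P (q, E, L) \<le> B * F i (q, E, L) - a * (\<Sum>j\<in>UNIV. q $ j) - PE * E - W i L"
proof -
  have "P $ i * F i (q, E, L) \<le> B * F i (q, E, L)"
    using assms F_nonneg[OF assms(1)] by (intro mult_right_mono) simp_all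
  moreover have "a * (\<Sum>j\<in>UNIV. q $ j) \<le> (\<Sum>j\<in>UNIV. P $ j * q $ j)"
    unfolding sum_distrib_left using assms by (intro sum_mono mult_right_mono) simp_all
  ultimately show ?thesis unfolding firm_profit_Pair by linarith
qed

lemma firm_profit_coercive_sublinear:
  assumes "prod_assm_a (F i)" "0 < a" "a \<le> B"
  obtains R where "\<And>P x. \<forall>k. a \<le> P $ k \<and> P $ k \<le> B \<Longrightarrow> x \<in> input_dom \<Longrightarrow> R \<le> norm x \<Longrightarrow>
    firm_profit i P x < - W i 0"
proof -
  obtain m where m: "0 < m" "\<And>L. 0 \<le> L \<Longrightarrow> W i 0 + m * (L - 1) \<le> W i L"
    using labor_assm_linear_lower_bound[OF labor_assm_W] by blast
  define c where "c = min (min a PE) m"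
  have c: "0 < c" "c \<le> a" "c \<le> PE" "c \<le> m" using m assms PE_pos by (simp_all add: c_def)
  obtain C where C: "\<And>x. x \<in> input_dom \<Longrightarrow> F i x \<le> c / (2 * B) * norm x + C"
    using prod_assm_a_affine_bound[OF assms(1) F_nonneg, of "c / (2 * B)"] c assms by auto
  have "firm_profit i P x < - W i 0"
    if P: "\<forall>k. a \<le> P $ k \<and> P $ k \<le> B" and x: "x \<in> input_dom"
      and R: "2 * (B * \<bar>C\<bar> + m) / c + 1 \<le> norm x" for P x
  proof -
    obtain q E L where xe: "x = (q, E, L)" by (cases x)
    have "B * F i x \<le> B * (c / (2 * B) * norm x + C)"
      using C[OF x] assms by (intro mult_left_mono) simp_all
    also have "\<dots> \<le> c * norm x / 2 + B * \<bar>C\<bar>"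
      using assms by (simp add: field_simps)
    finally have revenue: "B * F i x \<le> c * norm x / 2 + B * \<bar>C\<bar>" .
    have cost: "c * norm x \<le> a * (\<Sum>j\<in>UNIV. q $ j) + PE * E + m * L"
      using norm_input_le_weighted[of q E L c a PE m] x xe c by simp
    have "firm_profit i P x \<le> B * F i x - a * (\<Sum>j\<in>UNIV. q $ j) - PE * E - W i L"
      using firm_profit_le_price_bounds[of q E L a P B i] x xe P by simp
    also have "\<dots> \<le> B * \<bar>C\<bar> + m - W i 0 - c * norm x / 2"
      using revenue cost m(2)[of L] x xe by (simp add: algebra_simps)
    also have "\<dots> < - W i 0"
    proof -
      have "c * (2 * (B * \<bar>C\<bar> + m) / c + 1) = 2 * (B * \<bar>C\<bar> + m) + c"
        using c(1) by (simp add: field_simps)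
      then have "2 * (B * \<bar>C\<bar> + m) + c \<le> c * norm x"
        using mult_left_mono[OF R less_imp_le[OF c(1)]] by simp
      then show ?thesis using c(1) by (simp add: field_simps)
    qed
    finally show ?thesis .
  qed
  then show ?thesis using that by blast
qed

lemma firm_profit_coercive_labor_bounded:
  assumes "prod_assm_b (F i)" "growth_assm (W i)" "0 < a" "a \<le> B"
  obtains R where "\<And>P x. \<forall>k. a \<le> P $ k \<and> P $ k \<le> B \<Longrightarrow> x \<in> input_dom \<Longrightarrow> R \<le> norm x \<Longrightarrow>
    firm_profit i P x < - W i 0"
proof -
  obtain C where C: "0 \<le> C" "\<And>q E L. (q, E, L) \<in> input_dom \<Longrightarrow> F i (q, E, L) \<le> C * L"
    using prod_assm_b_labor_bound[OF assms(1)] by blast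
  obtain L0 where L0: "\<And>L. L0 \<le> L \<Longrightarrow> (B * C + 1) * L \<le> W i L"
    using growth_assm_eventually_ge_linear[OF assms(2)] by blast
  define L1 where "L1 = max L0 (W i 0 + 1)"
  define c where "c = min a PE"
  have c: "0 < c" "c \<le> a" "c \<le> PE" using assms PE_pos by (simp_all add: c_def)
  have "firm_profit i P x < - W i 0"
    if P: "\<forall>k. a \<le> P $ k \<and> P $ k \<le> B" and x: "x \<in> input_dom"
      and R: "L1 + B * C * L1 / c + 1 \<le> norm x" for P x
  proof -
    obtain q E L where xe: "x = (q, E, L)" by (cases x)
    have "B * F i x \<le> B * (C * L)" using C(2)[of q E L] x xe assms by (intro mult_left_mono) simp_all
    then have up: "firm_profit i P x \<le> B * C * L - a * (\<Sum>j\<in>UNIV. q $ j) - PE * E - W i L"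
      using firm_profit_le_price_bounds[of q E L a P B i] x xe P by simp
    show ?thesis
    proof (cases "L1 \<le> L")
      case True
      then have "B * C * L + L \<le> W i L" using L0[of L] by (simp add: L1_def algebra_simps)
      moreover have "0 \<le> a * (\<Sum>j\<in>UNIV. q $ j)" "0 \<le> PE * E"
        using x xe c PE_pos by (simp_all add: sum_nonneg)
      ultimately have "firm_profit i P x \<le> - L" using up by linarith
      then show ?thesis using True by (simp add: L1_def)
    next
      case False
      have "c * norm x \<le> a * (\<Sum>j\<in>UNIV. q $ j) + PE * E + c * L"
        using norm_input_le_weighted[of q E L c a PE c] x xe c by simp
      moreover have "B * C * L \<le> B * C * L1" using False C(1) assms by (intro mult_left_mono) simp_all
      moreover have "W i 0 \<le> W i L" using W_mono[of 0 L i] x xe by simp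
      moreover have "c * L \<le> c * L1" using False c by simp
      moreover have "c * (L1 + B * C * L1 / c + 1) \<le> c * norm x"
        using mult_left_mono[OF R less_imp_le[OF c(1)]] .
      moreover have "c * (L1 + B * C * L1 / c + 1) = c * L1 + B * C * L1 + c"
        using c by (simp add: field_simps)
      ultimately show ?thesis using up c by linarith
    qed
  qed
  then show ?thesis using that by blast
qed

lemma firm_profit_coercive:
  assumes "0 < a" "a \<le> B"
  obtains R where "\<And>P x. \<forall>k. a \<le> P $ k \<and> P $ k \<le> B \<Longrightarrow> x \<in> input_dom \<Longrightarrow> R \<le> norm x \<Longrightarrow>
    firm_profit i P x < - W i 0"
  using prod_labor[of i] firm_profit_coercive_sublinear[OF _ assms]
    firm_profit_coercive_labor_bounded[OF _ _ assms]
  by metis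

lemma input_cost_tendsto:
  "Pn \<longlonglongrightarrow> P \<Longrightarrow> x \<longlonglongrightarrow> xb \<Longrightarrow> (\<lambda>n. input_cost (Pn n) (x n)) \<longlonglongrightarrow> input_cost P xb"
  unfolding input_cost_def by (intro tendsto_intros)

lemma firm_profit_tendsto_price: "Pn \<longlonglongrightarrow> P \<Longrightarrow> (\<lambda>n. firm_profit i (Pn n) x) \<longlonglongrightarrow> firm_profit i P x"
  unfolding firm_profit_def by (intro tendsto_intros input_cost_tendsto) simp_all

lemma expense_eventually_greater:
  assumes "Pn \<longlonglongrightarrow> P" "\<And>n. x n \<in> input_dom" "x \<longlonglongrightarrow> xb" "xb \<in> input_dom" "0 < e"
  shows "eventually (\<lambda>n. input_cost P xb + W i (snd (snd xb)) - e
    < input_cost (Pn n) (x n) + W i (snd (snd (x n)))) sequentially"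
proof -
  have "eventually (\<lambda>n. input_cost P xb - e / 2 < input_cost (Pn n) (x n)) sequentially"
    using order_tendstoD(1)[OF input_cost_tendsto[OF assms(1,3)]] assms(5) by simp
  moreover have "eventually (\<lambda>n. W i (snd (snd xb)) - e / 2 < W i (snd (snd (x n)))) sequentially"
    by (rule lsc_on_eventually_greater[OF W_lsc, where x = "\<lambda>n. snd (snd (x n))"])
      (use assms(2-5) in \<open>auto intro: tendsto_intros labor_input_nonneg\<close>)
  ultimately show ?thesis by eventually_elim simp
qed

lemma firm_profit_eventually_less:
  assumes "Pn \<longlonglongrightarrow> P" "0 \<le> P $ i" "\<And>n. x n \<in> input_dom" "x \<longlonglongrightarrow> xb" "xb \<in> input_dom"
    and "firm_profit i P xb < c"
  shows "eventually (\<lambda>n. firm_profit i (Pn n) (x n) < c) sequentially"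
proof -
  define e where "e = c - firm_profit i P xb"
  have e: "0 < e" using assms(6) by (simp add: e_def)
  have "eventually (\<lambda>n. Pn n $ i * F i (x n) < P $ i * F i xb + e / 2) sequentially"
  proof (rule eventually_mult_less)
    show "(\<lambda>n. Pn n $ i) \<longlonglongrightarrow> P $ i" using assms(1) by (intro tendsto_intros)
    show "eventually (\<lambda>n. F i (x n) < d) sequentially" if "F i xb < d" for d
      using seq_usc_onD[OF usc_on_imp_seq_usc_on[OF F_usc] assms(3-5) that] .
  qed (use assms(2,3,5) e F_nonneg in auto)
  moreover have "eventually (\<lambda>n. input_cost P xb + W i (snd (snd xb)) - e / 2
      < input_cost (Pn n) (x n) + W i (snd (snd (x n)))) sequentially"
    using expense_eventually_greater[OF assms(1,3,4,5)] e by simp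
  ultimately show ?thesis
  proof eventually_elim
    case (elim n)
    then show ?case using e_def unfolding firm_profit_def by linarith
  qed
qed

lemma seq_usc_on_firm_profit: "0 \<le> P $ i \<Longrightarrow> seq_usc_on input_dom (firm_profit i P)"
  unfolding seq_usc_on_def using firm_profit_eventually_less[OF tendsto_const] by blast

lemma firm_profit_has_max:
  assumes "P \<in> pos_orthant"
  obtains x where "x \<in> input_dom" "\<And>y. y \<in> input_dom \<Longrightarrow> firm_profit i P y \<le> firm_profit i P x"
proof -
  obtain a B where aB: "0 < a" "a \<le> B" "\<And>k. a \<le> P $ k \<and> P $ k \<le> B"
    using pos_orthant_bounds[OF assms] by blast
  obtain R where R: "\<And>x. x \<in> input_dom \<Longrightarrow> R \<le> norm x \<Longrightarrow> firm_profit i P x < - W i 0"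
    using firm_profit_coercive[OF aB(1,2), of i] aB(3) by metis
  have Pi: "0 \<le> P $ i" using assms by (simp add: pos_orthant_def less_imp_le)
  define T :: "'n input set" where "T = cball 0 \<bar>R\<bar> \<inter> input_dom"
  have "compact T" unfolding T_def by (intro compact_Int_closed compact_cball closed_input_dom)
  moreover have zero: "(0, 0, 0) \<in> T" by (simp add: T_def)
  moreover have "seq_usc_on T (firm_profit i P)"
    using seq_usc_on_firm_profit[OF Pi] unfolding seq_usc_on_def T_def by blast
  ultimately obtain x where x: "x \<in> T" "\<And>y. y \<in> T \<Longrightarrow> firm_profit i P y \<le> firm_profit i P x"
    using seq_usc_on_compact_attains_max[of T "firm_profit i P"] by blast
  have "firm_profit i P y \<le> firm_profit i P x" if y: "y \<in> input_dom" for y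
  proof (cases "norm y \<le> \<bar>R\<bar>")
    case True
    then show ?thesis using x(2) y by (simp add: T_def)
  next
    case False
    then have "firm_profit i P y < - W i 0" using R y by simp
    also have "\<dots> \<le> firm_profit i P (0, 0, 0)" using firm_profit_zero_ge[OF Pi] .
    also have "\<dots> \<le> firm_profit i P x" using x(2) zero by blast
    finally show ?thesis by simp
  qed
  then show ?thesis using that x(1) unfolding T_def by blast
qed

lemma maximizer_limit:
  assumes Pn: "Pn \<longlonglongrightarrow> P" "P \<in> pos_orthant"
    and x: "\<And>n. x n \<in> input_dom" "x \<longlonglongrightarrow> xb"
    and opt: "\<And>n y. y \<in> input_dom \<Longrightarrow> firm_profit i (Pn n) y \<le> firm_profit i (Pn n) (x n)"
  shows "xb \<in> input_dom" "\<And>y. y \<in> input_dom \<Longrightarrow> firm_profit i P y \<le> firm_profit i P xb"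
proof -
  show xb: "xb \<in> input_dom" using closed_sequentially[OF closed_input_dom] x by blast
  fix y :: "'n input" assume y: "y \<in> input_dom"
  show "firm_profit i P y \<le> firm_profit i P xb"
  proof (rule ccontr)
    assume less: "\<not> firm_profit i P y \<le> firm_profit i P xb"
    define mid where "mid = (firm_profit i P y + firm_profit i P xb) / 2"
    have "0 \<le> P $ i" using Pn(2) by (simp add: pos_orthant_def less_imp_le)
    then have "eventually (\<lambda>n. firm_profit i (Pn n) (x n) < mid) sequentially"
      using firm_profit_eventually_less[OF Pn(1) _ x xb, where c = mid] less by (simp add: mid_def)
    moreover have "eventually (\<lambda>n. mid < firm_profit i (Pn n) y) sequentially"
      using order_tendstoD(1)[OF firm_profit_tendsto_price[OF Pn(1)], where a = mid] less
      by (simp add: mid_def)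
    ultimately have "eventually (\<lambda>n. False) sequentially"
    proof eventually_elim
      case (elim n)
      then show False using opt[OF y, of n] by linarith
    qed
    then show False by simp
  qed
qed

lemma revenue_eventually_greater:
  assumes Pn: "Pn \<longlonglongrightarrow> P" and x: "\<And>n. x n \<in> input_dom" "x \<longlonglongrightarrow> xb" and xb: "xb \<in> input_dom"
    and opt: "\<And>n. firm_profit i (Pn n) xb \<le> firm_profit i (Pn n) (x n)" and "0 < e"
  shows "eventually (\<lambda>n. P $ i * F i xb - e < Pn n $ i * F i (x n)) sequentially"
proof -
  have "eventually (\<lambda>n. input_cost P xb + W i (snd (snd xb)) - e / 2
      < input_cost (Pn n) (x n) + W i (snd (snd (x n)))) sequentially"
    using expense_eventually_greater[OF Pn x xb] assms(6) by simp
  moreover have "eventually (\<lambda>n. firm_profit i P xb - e / 2 < firm_profit i (Pn n) xb) sequentially"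
    using order_tendstoD(1)[OF firm_profit_tendsto_price[OF Pn]] assms(6) by simp
  ultimately show ?thesis
  proof eventually_elim
    case (elim n)
    then show ?case using opt[of n] unfolding firm_profit_def by linarith
  qed
qed

lemma output_tendsto_at_maximizer_limit:
  assumes Pn: "Pn \<longlonglongrightarrow> P" "P \<in> pos_orthant" and x: "\<And>n. x n \<in> input_dom" "x \<longlonglongrightarrow> xb"
    and opt: "\<And>n y. y \<in> input_dom \<Longrightarrow> firm_profit i (Pn n) y \<le> firm_profit i (Pn n) (x n)"
  shows "(\<lambda>n. F i (x n)) \<longlonglongrightarrow> F i xb"
proof (rule order_tendstoI)
  have xb: "xb \<in> input_dom" using maximizer_limit(1)[OF Pn x opt] .
  have Pi: "0 < P $ i" using Pn(2) by (simp add: pos_orthant_def)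
  show "eventually (\<lambda>n. F i (x n) < c) sequentially" if "F i xb < c" for c
    using seq_usc_onD[OF usc_on_imp_seq_usc_on[OF F_usc] x xb that] .
  fix c assume c: "c < F i xb"
  define e where "e = P $ i * (F i xb - c) / 2"
  have e: "0 < e" using c Pi by (simp add: e_def)
  have "(\<lambda>n. (P $ i * F i xb - e) / Pn n $ i) \<longlonglongrightarrow> (P $ i * F i xb - e) / P $ i"
    using Pn(1) Pi by (intro tendsto_intros) simp_all
  moreover have "c < (P $ i * F i xb - e) / P $ i" using Pi c by (simp add: e_def field_simps)
  ultimately have "eventually (\<lambda>n. c < (P $ i * F i xb - e) / Pn n $ i) sequentially"
    by (rule order_tendstoD(1))
  moreover have "eventually (\<lambda>n. 0 < Pn n $ i) sequentially"
    using order_tendstoD(1)[OF tendsto_vec_nth[OF Pn(1)]] Pi by blast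
  moreover have "eventually (\<lambda>n. P $ i * F i xb - e < Pn n $ i * F i (x n)) sequentially"
    using revenue_eventually_greater[OF Pn(1) x xb _ e] opt xb by blast
  ultimately show "eventually (\<lambda>n. c < F i (x n)) sequentially"
  proof eventually_elim
    case (elim n)
    then have "c * Pn n $ i < P $ i * F i xb - e" by (simp add: pos_less_divide_eq)
    then have "Pn n $ i * c < Pn n $ i * F i (x n)"
      using elim(3) by (metis mult.commute order.strict_trans)
    then show ?case using elim(2) by simp
  qed
qed

section \<open>Aggregate supply\<close>

definition net_supply :: "'n alloc \<Rightarrow> real^'n" where
  "net_supply X = (\<chi> k. F k (firm_inputs X k) - (\<Sum>i\<in>UNIV. fst X $ i $ k))"

definition market_demand :: "real^'n \<Rightarrow> real^'n" where
  "market_demand P = (\<chi> k. D k (P $ k))"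

definition optimal_allocs :: "real^'n \<Rightarrow> 'n alloc set" where
  "optimal_allocs P = {X. \<forall>i. firm_inputs X i \<in> input_dom \<and>
     (\<forall>y\<in>input_dom. firm_profit i P y \<le> firm_profit i P (firm_inputs X i))}"

definition max_profit :: "'n \<Rightarrow> real^'n \<Rightarrow> real" where
  "max_profit i P = (SUP x\<in>input_dom. firm_profit i P x)"

lemma optimal_allocsD:
  "X \<in> optimal_allocs P \<Longrightarrow> firm_inputs X i \<in> input_dom"
  "X \<in> optimal_allocs P \<Longrightarrow> y \<in> input_dom \<Longrightarrow> firm_profit i P y \<le> firm_profit i P (firm_inputs X i)"
  by (simp_all add: optimal_allocs_def)

lemma optimal_allocs_nonempty:
  assumes "P \<in> pos_orthant"
  obtains X where "X \<in> optimal_allocs P"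
proof -
  have "\<forall>i. \<exists>x. x \<in> input_dom \<and> (\<forall>y\<in>input_dom. firm_profit i P y \<le> firm_profit i P x)"
    using firm_profit_has_max[OF assms] by metis
  then obtain x where x: "\<And>i. x i \<in> input_dom"
      "\<And>i y. y \<in> input_dom \<Longrightarrow> firm_profit i P y \<le> firm_profit i P (x i)"
    by metis
  define X :: "'n alloc" where "X = ((\<chi> i. fst (x i)), (\<chi> i. fst (snd (x i))), (\<chi> i. snd (snd (x i))))"
  have "firm_inputs X i = x i" for i by (simp add: X_def firm_inputs_def)
  then show ?thesis using that[of X] x by (simp add: optimal_allocs_def)
qed

lemma max_profit_eq:
  assumes "x \<in> input_dom" "\<And>y. y \<in> input_dom \<Longrightarrow> firm_profit i P y \<le> firm_profit i P x"
  shows "max_profit i P = firm_profit i P x"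
  unfolding max_profit_def using assms by (intro cSup_eq_maximum) auto

lemma max_profit_ge:
  assumes "P \<in> pos_orthant" "y \<in> input_dom"
  shows "firm_profit i P y \<le> max_profit i P"
proof -
  obtain x where "x \<in> input_dom" "\<And>y. y \<in> input_dom \<Longrightarrow> firm_profit i P y \<le> firm_profit i P x"
    using firm_profit_has_max[OF assms(1)] by blast
  then show ?thesis using assms(2) max_profit_eq by metis
qed

lemma max_profit_optimal_allocs:
  "X \<in> optimal_allocs P \<Longrightarrow> max_profit i P = firm_profit i P (firm_inputs X i)"
  by (simp add: max_profit_eq optimal_allocsD)

lemma max_profit_ge_neg_W0: "P \<in> pos_orthant \<Longrightarrow> - W i 0 \<le> max_profit i P"
  using firm_profit_zero_ge[of P i] max_profit_ge[of P "(0, 0, 0)" i]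
  by (simp add: pos_orthant_def less_imp_le)

lemma firm_profit_affine_price:
  assumes "u + v = 1"
  shows "firm_profit i (u *\<^sub>R P + v *\<^sub>R P') x = u * firm_profit i P x + v * firm_profit i P' x"
proof -
  have v: "v = 1 - u" using assms by simp
  show ?thesis
    unfolding firm_profit_def input_cost_def v
    by (simp add: sum.distrib sum_distrib_left sum_subtractf algebra_simps)
qed

lemma convex_on_max_profit: "convex_on pos_orthant (max_profit i)"
proof (rule convex_onI[OF _ convex_pos_orthant])
  fix t :: real and P P' :: "real^'n"
  assume t: "0 < t" "t < 1" and P: "P \<in> pos_orthant" "P' \<in> pos_orthant"
  define Pt where "Pt = (1 - t) *\<^sub>R P + t *\<^sub>R P'"
  have "Pt \<in> pos_orthant" unfolding Pt_def using t P by (intro convexD[OF convex_pos_orthant]) auto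
  then obtain x where x: "x \<in> input_dom" "\<And>y. y \<in> input_dom \<Longrightarrow> firm_profit i Pt y \<le> firm_profit i Pt x"
    using firm_profit_has_max by blast
  have "max_profit i Pt = (1 - t) * firm_profit i P x + t * firm_profit i P' x"
    using max_profit_eq[OF x] firm_profit_affine_price[of "1 - t" t] by (simp add: Pt_def)
  also have "\<dots> \<le> (1 - t) * max_profit i P + t * max_profit i P'"
    using t max_profit_ge[OF P(1) x(1)] max_profit_ge[OF P(2) x(1)]
    by (intro add_mono mult_left_mono) simp_all
  finally show "max_profit i ((1 - t) *\<^sub>R P + t *\<^sub>R P') \<le> (1 - t) * max_profit i P + t * max_profit i P'"
    by (simp add: Pt_def)
qed

lemma continuous_on_max_profit: "continuous_on pos_orthant (max_profit i)"
  by (rule convex_on_continuous[OF open_pos_orthant convex_on_max_profit])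

lemma inner_net_supply:
  "v \<bullet> net_supply X = (\<Sum>i\<in>UNIV. v $ i * F i (firm_inputs X i) - (\<Sum>j\<in>UNIV. v $ j * fst X $ i $ j))"
proof -
  have "v \<bullet> net_supply X
      = (\<Sum>k\<in>UNIV. v $ k * F k (firm_inputs X k)) - (\<Sum>k\<in>UNIV. \<Sum>i\<in>UNIV. v $ k * fst X $ i $ k)"
    by (simp add: inner_vec_def net_supply_def right_diff_distrib sum_subtractf sum_distrib_left)
  also have "(\<Sum>k\<in>UNIV. \<Sum>i\<in>UNIV. v $ k * fst X $ i $ k) = (\<Sum>i\<in>UNIV. \<Sum>k\<in>UNIV. v $ k * fst X $ i $ k)"
    by (rule sum.swap)
  finally show ?thesis by (simp add: sum_subtractf)
qed

lemma sum_firm_profit_price_shift: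
  "(\<Sum>i\<in>UNIV. firm_profit i P' (firm_inputs X i))
    = (\<Sum>i\<in>UNIV. firm_profit i P (firm_inputs X i)) + (P' - P) \<bullet> net_supply X"
proof -
  have "firm_profit i P' (firm_inputs X i) = firm_profit i P (firm_inputs X i)
      + ((P' - P) $ i * F i (firm_inputs X i) - (\<Sum>j\<in>UNIV. (P' - P) $ j * fst X $ i $ j))" for i
    by (simp add: firm_profit_def input_cost_def firm_inputs_def algebra_simps sum_subtractf)
  then show ?thesis unfolding inner_net_supply by (simp add: sum.distrib)
qed

lemma net_supply_monotone:
  assumes "X \<in> optimal_allocs P" "X' \<in> optimal_allocs P'"
  shows "(P' - P) \<bullet> net_supply X \<le> (P' - P) \<bullet> net_supply X'"
proof -
  have "(\<Sum>i\<in>UNIV. firm_profit i P (firm_inputs X' i)) \<le> (\<Sum>i\<in>UNIV. firm_profit i P (firm_inputs X i))"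
    "(\<Sum>i\<in>UNIV. firm_profit i P' (firm_inputs X i)) \<le> (\<Sum>i\<in>UNIV. firm_profit i P' (firm_inputs X' i))"
    using assms by (auto intro!: sum_mono optimal_allocsD)
  then show ?thesis
    using sum_firm_profit_price_shift[of P' X P] sum_firm_profit_price_shift[of P' X' P] by simp
qed

lemma sum_max_profit_le:
  assumes "P \<in> pos_orthant" "X \<in> optimal_allocs P'"
  shows "(\<Sum>i\<in>UNIV. max_profit i P') \<le> (\<Sum>i\<in>UNIV. max_profit i P) + (P' - P) \<bullet> net_supply X"
proof -
  have "(\<Sum>i\<in>UNIV. max_profit i P')
      = (\<Sum>i\<in>UNIV. firm_profit i P (firm_inputs X i)) + (P' - P) \<bullet> net_supply X"
    using max_profit_optimal_allocs[OF assms(2)] sum_firm_profit_price_shift[of P' X P] by simp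
  also have "(\<Sum>i\<in>UNIV. firm_profit i P (firm_inputs X i)) \<le> (\<Sum>i\<in>UNIV. max_profit i P)"
    using assms by (intro sum_mono max_profit_ge optimal_allocsD)
  finally show ?thesis by simp
qed

lemma optimal_inputs_convex_comb:
  assumes P: "P \<in> pos_orthant"
    and x: "x \<in> input_dom" "\<And>w. w \<in> input_dom \<Longrightarrow> firm_profit i P w \<le> firm_profit i P x"
    and y: "y \<in> input_dom" "\<And>w. w \<in> input_dom \<Longrightarrow> firm_profit i P w \<le> firm_profit i P y"
    and uv: "0 \<le> u" "0 \<le> v" "u + v = 1"
  defines "z \<equiv> u *\<^sub>R x + v *\<^sub>R y"
  shows "z \<in> input_dom" "\<And>w. w \<in> input_dom \<Longrightarrow> firm_profit i P w \<le> firm_profit i P z"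
    and "F i z = u * F i x + v * F i y"
proof -
  show z: "z \<in> input_dom" unfolding z_def by (rule convexD[OF convex_input_dom x(1) y(1) uv])
  have F_ge: "u * F i x + v * F i y \<le> F i z"
    using F_concave x(1) y(1) uv unfolding concave_on_iff z_def by blast
  have W_le: "W i (snd (snd z)) \<le> u * W i (snd (snd x)) + v * W i (snd (snd y))"
  proof -
    have u: "u = 1 - v" using uv(3) by simp
    show ?thesis
      using convex_onD[OF W_convex, of v "snd (snd x)" "snd (snd y)"] uv
        labor_input_nonneg[OF x(1)] labor_input_nonneg[OF y(1)]
      by (simp add: z_def u)
  qed
  have "firm_profit i P x = u * firm_profit i P x + v * firm_profit i P y"
    using x y uv(3) by (metis order_antisym distrib_right mult_1)
  then have split: "firm_profit i P z = firm_profit i P x + P $ i * (F i z - (u * F i x + v * F i y))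
      + (u * W i (snd (snd x)) + v * W i (snd (snd y)) - W i (snd (snd z)))"
    unfolding firm_profit_def z_def input_cost_def
    by (simp add: sum.distrib sum_distrib_left algebra_simps)
  have Pi: "0 < P $ i" using P by (simp add: pos_orthant_def)
  have "0 \<le> P $ i * (F i z - (u * F i x + v * F i y))" using Pi F_ge by simp
  then have "firm_profit i P x \<le> firm_profit i P z" using split W_le by linarith
  then show "firm_profit i P w \<le> firm_profit i P z" if "w \<in> input_dom" for w
    using x(2)[OF that] by linarith
  have "P $ i * (F i z - (u * F i x + v * F i y)) \<le> 0"
    using split W_le x(2)[OF z] by linarith
  then show "F i z = u * F i x + v * F i y"
    using Pi F_ge by (simp add: mult_le_0_iff)
qed

lemma convex_net_supply_optimal:
  assumes P: "P \<in> pos_orthant"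
  shows "convex (net_supply ` optimal_allocs P)"
proof (rule convexI)
  fix s1 s2 and u v :: real
  assume s: "s1 \<in> net_supply ` optimal_allocs P" "s2 \<in> net_supply ` optimal_allocs P"
    and uv: "0 \<le> u" "0 \<le> v" "u + v = 1"
  obtain X Y where XY: "X \<in> optimal_allocs P" "Y \<in> optimal_allocs P"
      "s1 = net_supply X" "s2 = net_supply Y"
    using s by blast
  define Z where "Z = u *\<^sub>R X + v *\<^sub>R Y"
  note comb = optimal_inputs_convex_comb[OF P optimal_allocsD(1)[OF XY(1)] optimal_allocsD(2)[OF XY(1)]
      optimal_allocsD(1)[OF XY(2)] optimal_allocsD(2)[OF XY(2)] uv, folded firm_inputs_add_scaleR Z_def]
  have "Z \<in> optimal_allocs P" using comb(1,2) by (simp add: optimal_allocs_def)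
  moreover have "net_supply Z = u *\<^sub>R s1 + v *\<^sub>R s2"
  proof -
    have "(\<Sum>i\<in>UNIV. fst Z $ i $ k) = u * (\<Sum>i\<in>UNIV. fst X $ i $ k) + v * (\<Sum>i\<in>UNIV. fst Y $ i $ k)" for k
      by (simp add: Z_def sum.distrib sum_distrib_left)
    then show ?thesis
      using comb(3) unfolding XY(3,4) by (simp add: net_supply_def vec_eq_iff algebra_simps)
  qed
  ultimately show "u *\<^sub>R s1 + v *\<^sub>R s2 \<in> net_supply ` optimal_allocs P" by (metis image_eqI)
qed

lemma optimal_allocs_bounded:
  assumes "0 < a" "\<And>n k. a \<le> Pn n $ k \<and> Pn n $ k \<le> B" "\<And>n. Xn n \<in> optimal_allocs (Pn n)"
  shows "bounded (range Xn)"
proof -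
  have "a \<le> B" using assms(2)[where n = undefined and k = undefined] by linarith
  then have "\<forall>i. \<exists>R. \<forall>P x. (\<forall>k. a \<le> P $ k \<and> P $ k \<le> B) \<longrightarrow> x \<in> input_dom \<longrightarrow> R \<le> norm x \<longrightarrow>
      firm_profit i P x < - W i 0"
    using firm_profit_coercive[OF assms(1)] by metis
  then obtain R where R: "\<And>i P x. \<forall>k. a \<le> P $ k \<and> P $ k \<le> B \<Longrightarrow> x \<in> input_dom \<Longrightarrow>
      R i \<le> norm x \<Longrightarrow> firm_profit i P x < - W i 0"
    by metis
  have "norm (firm_inputs (Xn n) i) \<le> R i" for n i
  proof (rule ccontr)
    assume "\<not> norm (firm_inputs (Xn n) i) \<le> R i"
    then have "firm_profit i (Pn n) (firm_inputs (Xn n) i) < - W i 0"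
      using R[OF allI[OF assms(2)[where n = n]] optimal_allocsD(1)[OF assms(3)]] by simp
    moreover have "firm_profit i (Pn n) (0, 0, 0) \<le> firm_profit i (Pn n) (firm_inputs (Xn n) i)"
      by (rule optimal_allocsD(2)[OF assms(3)]) simp
    moreover have "- W i 0 \<le> firm_profit i (Pn n) (0, 0, 0)"
      by (rule firm_profit_zero_ge) (use assms(1) assms(2)[where n = n and k = i] in linarith)
    ultimately show False by simp
  qed
  then have "norm (Xn n) \<le> 3 * (\<Sum>i\<in>UNIV. R i)" for n
    using norm_alloc_le_sum_firm_inputs[of "Xn n"] sum_mono[of UNIV "\<lambda>i. norm (firm_inputs (Xn n) i)" R]
    by simp
  then show ?thesis unfolding bounded_iff by blast
qed

lemma optimal_allocs_subseq_limit:
  assumes Pn: "Pn \<longlonglongrightarrow> P" "P \<in> pos_orthant" and X: "\<And>n. Xn n \<in> optimal_allocs (Pn n)"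
    and bd: "bounded (range Xn)"
  obtains r Xb where "strict_mono r" "Xb \<in> optimal_allocs P"
    "(\<lambda>n. net_supply (Xn (r n))) \<longlonglongrightarrow> net_supply Xb"
proof -
  obtain Xb r where r: "strict_mono r" "(Xn \<circ> r) \<longlonglongrightarrow> Xb"
    using bounded_imp_convergent_subsequence[OF bd] by blast
  have Pr: "(\<lambda>n. Pn (r n)) \<longlonglongrightarrow> P" using LIMSEQ_subseq_LIMSEQ[OF Pn(1) r(1)] by (simp add: comp_def)
  have inputs: "(\<lambda>n. firm_inputs (Xn (r n)) i) \<longlonglongrightarrow> firm_inputs Xb i" for i
    using firm_inputs_tendsto[OF r(2)] by (simp add: comp_def)
  have dom: "firm_inputs (Xn (r n)) i \<in> input_dom" for i n
    using optimal_allocsD(1)[OF X] .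
  have opt: "\<And>n y. y \<in> input_dom \<Longrightarrow>
      firm_profit i (Pn (r n)) y \<le> firm_profit i (Pn (r n)) (firm_inputs (Xn (r n)) i)"
    for i using optimal_allocsD(2)[OF X] by blast
  have "Xb \<in> optimal_allocs P"
    using maximizer_limit[OF Pr Pn(2) dom inputs opt] by (simp add: optimal_allocs_def)
  moreover have "(\<lambda>n. net_supply (Xn (r n))) \<longlonglongrightarrow> net_supply Xb"
    unfolding net_supply_def
  proof (rule tendsto_vec_lambda)
    fix k
    have "(\<lambda>n. fst (Xn (r n))) \<longlonglongrightarrow> fst Xb" using tendsto_fst[OF r(2)] by (simp add: comp_def)
    then have sums: "(\<lambda>n. \<Sum>i\<in>UNIV. fst (Xn (r n)) $ i $ k) \<longlonglongrightarrow> (\<Sum>i\<in>UNIV. fst Xb $ i $ k)"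
      by (intro tendsto_sum tendsto_vec_nth)
    have "(\<lambda>n. F k (firm_inputs (Xn (r n)) k)) \<longlonglongrightarrow> F k (firm_inputs Xb k)"
      by (rule output_tendsto_at_maximizer_limit[OF Pr Pn(2) dom inputs opt])
    then show "(\<lambda>n. F k (firm_inputs (Xn (r n)) k) - (\<Sum>i\<in>UNIV. fst (Xn (r n)) $ i $ k))
        \<longlonglongrightarrow> F k (firm_inputs Xb k) - (\<Sum>i\<in>UNIV. fst Xb $ i $ k)"
      using sums by (rule tendsto_diff)
  qed
  ultimately show ?thesis using that r(1) by blast
qed

lemma closed_net_supply_optimal:
  assumes P: "P \<in> pos_orthant"
  shows "closed (net_supply ` optimal_allocs P)"
  unfolding closed_sequential_limits
proof (intro allI impI, elim conjE)
  fix s l assume s: "\<forall>n. s n \<in> net_supply ` optimal_allocs P" "s \<longlonglongrightarrow> l"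
  have "\<forall>n. \<exists>X. X \<in> optimal_allocs P \<and> s n = net_supply X" using s(1) by blast
  then obtain Xn where Xn: "\<And>n. Xn n \<in> optimal_allocs P" "\<And>n. s n = net_supply (Xn n)"
    by metis
  obtain a B where "0 < a" "\<And>k. a \<le> P $ k \<and> P $ k \<le> B"
    using pos_orthant_bounds[OF P] by blast
  then have "bounded (range Xn)" using optimal_allocs_bounded[of a "\<lambda>_. P" B Xn] Xn(1) by blast
  then obtain r Xb where r: "strict_mono r" "Xb \<in> optimal_allocs P"
      "(\<lambda>n. net_supply (Xn (r n))) \<longlonglongrightarrow> net_supply Xb"
    using optimal_allocs_subseq_limit[of "\<lambda>_. P" P Xn] tendsto_const P Xn(1) by blast
  have "(\<lambda>n. net_supply (Xn (r n))) \<longlonglongrightarrow> l"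
    using LIMSEQ_subseq_LIMSEQ[OF s(2) r(1)] Xn(2) by (simp add: comp_def)
  then have "l = net_supply Xb" using r(3) LIMSEQ_unique by blast
  then show "l \<in> net_supply ` optimal_allocs P" using r(2) by blast
qed

section \<open>The potential\<close>

(* Normalised at c > 0 rather than at 0, where the demand may blow up. *)
definition demand_integral :: "real \<Rightarrow> 'n \<Rightarrow> real \<Rightarrow> real" where
  "demand_integral c k p = integral {c..p} (D k)"

definition potential :: "real \<Rightarrow> real^'n \<Rightarrow> real" where
  "potential c P = (\<Sum>i\<in>UNIV. max_profit i P) - (\<Sum>k\<in>UNIV. demand_integral c k (P $ k))"

lemma demand_integral_le_tangent:
  "0 < c \<Longrightarrow> c \<le> p \<Longrightarrow> c \<le> q \<Longrightarrow>
    demand_integral c k p \<le> demand_integral c k q + D k q * (p - q)"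
  unfolding demand_integral_def
  by (rule integral_decreasing_le_tangent) (auto intro: continuous_on_subset[OF D_cont] D_mono)

lemma continuous_on_demand_integral: "0 < c \<Longrightarrow> continuous_on {c..b} (demand_integral c k)"
  unfolding demand_integral_def
  by (intro indefinite_integral_continuous_1 integrable_continuous_real
      continuous_on_subset[OF D_cont]) auto

lemma potential_diff_le:
  assumes "P \<in> pos_orthant" "X \<in> optimal_allocs P'" "0 < c" "\<forall>k. c \<le> P $ k \<and> c \<le> P' $ k"
  shows "potential c P' - potential c P \<le> (P' - P) \<bullet> (net_supply X - market_demand P')"
proof -
  have "(\<Sum>k\<in>UNIV. demand_integral c k (P $ k))
      \<le> (\<Sum>k\<in>UNIV. demand_integral c k (P' $ k) + D k (P' $ k) * (P $ k - P' $ k))"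
    using assms(3,4) by (intro sum_mono demand_integral_le_tangent) auto
  also have "\<dots> = (\<Sum>k\<in>UNIV. demand_integral c k (P' $ k)) - (P' - P) \<bullet> market_demand P'"
    by (simp add: inner_vec_def market_demand_def sum.distrib sum_subtractf algebra_simps
        flip: sum_negf)
  finally show ?thesis
    using sum_max_profit_le[OF assms(1,2)] unfolding potential_def inner_diff_right by simp
qed

lemma demand_integral_le_linear:
  assumes "0 < c" "eventually (\<lambda>p. D k p \<le> \<epsilon>) at_top"
  obtains C where "\<And>p. c \<le> p \<Longrightarrow> demand_integral c k p \<le> C + \<epsilon> * p"
proof -
  obtain T where T: "c \<le> T" "D k T \<le> \<epsilon>"
    using eventually_conj[OF assms(2) eventually_ge_at_top[of c]] eventually_happens'[of at_top]
    by (metis (mono_tags, lifting) trivial_limit_at_top_linorder)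
  have "demand_integral c k p \<le> demand_integral c k T + \<bar>D k T\<bar> * T + \<epsilon> * p" if p: "c \<le> p" for p
  proof -
    have "D k T * p \<le> \<epsilon> * p" using T p assms(1) by (intro mult_right_mono) simp_all
    moreover have "- D k T * T \<le> \<bar>D k T\<bar> * T" using T assms(1) by (intro mult_right_mono) simp_all
    ultimately show ?thesis
      using demand_integral_le_tangent[OF assms(1) p T(1), of k] by (simp add: algebra_simps)
  qed
  then show ?thesis using that by blast
qed

lemma sum_demand_integral_le_linear:
  assumes "0 < c" "\<And>k. eventually (\<lambda>p. D k p \<le> \<epsilon>) at_top"
  obtains C where "\<And>P. \<forall>k. c \<le> P $ k \<Longrightarrow> (\<Sum>k\<in>UNIV. demand_integral c k (P $ k)) \<le> C + \<epsilon> * (\<Sum>k\<in>UNIV. P $ k)"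
proof -
  have "\<forall>k. \<exists>C. \<forall>p. c \<le> p \<longrightarrow> demand_integral c k p \<le> C + \<epsilon> * p"
    using demand_integral_le_linear[OF assms] by metis
  then obtain C where C: "\<And>k p. c \<le> p \<Longrightarrow> demand_integral c k p \<le> C k + \<epsilon> * p" by metis
  have "(\<Sum>k\<in>UNIV. demand_integral c k (P $ k)) \<le> (\<Sum>k\<in>UNIV. C k) + \<epsilon> * (\<Sum>k\<in>UNIV. P $ k)"
    if "\<forall>k. c \<le> P $ k" for P
    using that C by (simp add: sum_mono sum.distrib[symmetric] sum_distrib_left)
  then show ?thesis using that by blast
qed

lemma sum_demand_integral_le_small_linear:
  assumes "0 < c" "0 < \<epsilon>"
  obtains C where "\<And>P. \<forall>k. c \<le> P $ k \<Longrightarrow> (\<Sum>k\<in>UNIV. demand_integral c k (P $ k)) \<le> C + \<epsilon> * (\<Sum>k\<in>UNIV. P $ k)"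
proof -
  have "eventually (\<lambda>p. D k p \<le> \<epsilon>) at_top" for k
  proof -
    have "eventually (\<lambda>p. D k p < \<epsilon>) at_top"
      using demand[of k] assms(2) unfolding demand_assm_def by simp
    then show ?thesis by (rule eventually_mono) simp
  qed
  then show ?thesis using sum_demand_integral_le_linear[OF assms(1)] that by blast
qed

lemma sum_max_profit_ge:
  assumes "P \<in> pos_orthant"
  shows "max_profit k P - (\<Sum>i\<in>UNIV. W i 0) \<le> (\<Sum>i\<in>UNIV. max_profit i P)"
proof -
  have "0 \<le> max_profit i P + W i 0" for i using max_profit_ge_neg_W0[OF assms, of i] by linarith
  then have "max_profit k P + W k 0 \<le> (\<Sum>i\<in>UNIV. max_profit i P + W i 0)"
    by (intro member_le_sum) simp_all
  moreover have "0 \<le> W k 0" using W_pos[of 0 k] by simp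
  ultimately show ?thesis by (simp add: sum.distrib)
qed

lemma potential_coercive_external_supply:
  assumes "unbounded_external_supply D" "0 < c"
  obtains C where "\<And>P k. \<forall>j. c \<le> P $ j \<Longrightarrow> P $ k - C \<le> potential c P"
proof -
  have "eventually (\<lambda>p. D k p \<le> -1) at_top" for k
    using assms(1) unfolding unbounded_external_supply_def filterlim_at_bot by blast
  then obtain C where C: "\<And>P. \<forall>k. c \<le> P $ k \<Longrightarrow>
      (\<Sum>k\<in>UNIV. demand_integral c k (P $ k)) \<le> C + - 1 * (\<Sum>k\<in>UNIV. P $ k)"
    using sum_demand_integral_le_linear[OF assms(2)] by blast
  have "P $ k - ((\<Sum>i\<in>UNIV. W i 0) + C) \<le> potential c P" if P: "\<forall>j. c \<le> P $ j" for P k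
  proof -
    have "P \<in> pos_orthant" using P assms(2) by (auto simp: pos_orthant_def intro: less_le_trans)
    then have "- (\<Sum>i\<in>UNIV. W i 0) \<le> (\<Sum>i\<in>UNIV. max_profit i P)"
      using max_profit_ge_neg_W0 by (simp add: sum_negf[symmetric] sum_mono)
    moreover have "P $ k \<le> (\<Sum>j\<in>UNIV. P $ j)"
      using P assms(2) by (intro member_le_sum) (auto intro: order_trans less_imp_le)
    ultimately show ?thesis using C[OF P] unfolding potential_def by simp
  qed
  then show ?thesis using that by blast
qed

lemma max_profit_ge_scaled:
  assumes "P \<in> pos_orthant" "(q, E, L) \<in> input_dom" "0 \<le> s"
    and "\<forall>j. P $ j \<le> s * pbar $ j" "P $ i = s * pbar $ i"
  shows "s * (pbar $ i * F i (q, E, L) - (\<Sum>j\<in>UNIV. pbar $ j * q $ j)) - (PE * E + W i L)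
    \<le> max_profit i P"
proof -
  have "(\<Sum>j\<in>UNIV. P $ j * q $ j) \<le> s * (\<Sum>j\<in>UNIV. pbar $ j * q $ j)"
    unfolding sum_distrib_left using assms(2,4)
    by (intro sum_mono) (simp add: mult_right_mono flip: mult.assoc)
  then show ?thesis
    using max_profit_ge[OF assms(1,2), of i] assms(5) unfolding firm_profit_Pair
    by (simp add: algebra_simps)
qed

lemma sum_max_profit_ge_viable:
  assumes viable: "\<forall>i j. 0 \<le> Qb $ i $ j" "\<forall>i. 0 \<le> Eb $ i" "\<forall>i. 0 \<le> Lb $ i" "pbar \<in> pos_orthant"
    and margin: "\<And>i. v \<le> pbar $ i * F i (Qb $ i, Eb $ i, Lb $ i) - (\<Sum>j\<in>UNIV. pbar $ j * Qb $ i $ j)"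
    and P: "P \<in> pos_orthant" "\<forall>j. P $ j \<le> s * pbar $ j" "P $ k = s * pbar $ k"
  shows "s * v - (\<Sum>i\<in>UNIV. W i 0 + (PE * Eb $ i + W i (Lb $ i))) \<le> (\<Sum>i\<in>UNIV. max_profit i P)"
proof -
  have "0 < s * pbar $ k" using P(1) unfolding P(3)[symmetric] by (simp add: pos_orthant_def)
  moreover have "0 < pbar $ k" using viable(4) by (simp add: pos_orthant_def)
  ultimately have s: "0 \<le> s" by (simp add: zero_less_mult_iff)
  have "s * v - (PE * Eb $ k + W k (Lb $ k)) \<le> max_profit k P"
    using max_profit_ge_scaled[OF P(1) _ s P(2,3), of "Qb $ k" "Eb $ k" "Lb $ k"] viable(1-3)
      mult_left_mono[OF margin[of k] s] by simp
  moreover have "PE * Eb $ k + W k (Lb $ k) \<le> (\<Sum>i\<in>UNIV. PE * Eb $ i + W i (Lb $ i))"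
    using viable(2,3) PE_pos W_pos by (intro member_le_sum) (simp_all add: add_nonneg_nonneg less_imp_le)
  ultimately show ?thesis using sum_max_profit_ge[OF P(1), of k] by (simp add: sum.distrib)
qed

lemma potential_coercive_viability:
  assumes "market_viability F" "0 < c"
  obtains pbar \<kappa> C where "pbar \<in> pos_orthant" "0 < \<kappa>"
    "\<And>P k. \<forall>j. c \<le> P $ j \<Longrightarrow> \<kappa> * (P $ k / pbar $ k) - C \<le> potential c P"
proof -
  obtain Qb Eb Lb pbar where vb: "\<forall>i j. 0 \<le> Qb $ i $ j" "\<forall>i. 0 \<le> Eb $ i" "\<forall>i. 0 \<le> Lb $ i"
      "\<forall>i. 0 < pbar $ i"
      "\<forall>i. pbar $ i * F i (Qb $ i, Eb $ i, Lb $ i) - (\<Sum>j\<in>UNIV. pbar $ j * Qb $ i $ j) > 0"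
    using assms(1) unfolding market_viability_def by blast
  define v where
    "v = Min (range (\<lambda>i. pbar $ i * F i (Qb $ i, Eb $ i, Lb $ i) - (\<Sum>j\<in>UNIV. pbar $ j * Qb $ i $ j)))"
  have v: "0 < v" "\<And>i. v \<le> pbar $ i * F i (Qb $ i, Eb $ i, Lb $ i) - (\<Sum>j\<in>UNIV. pbar $ j * Qb $ i $ j)"
    unfolding v_def using vb(5) by simp_all
  have pbar: "pbar \<in> pos_orthant" using vb(4) by (simp add: pos_orthant_def)
  define S where "S = (\<Sum>k\<in>UNIV. pbar $ k)"
  have S: "0 < S" unfolding S_def using vb(4) by (simp add: sum_pos)
  obtain Cd where Cd: "\<And>P. \<forall>k. c \<le> P $ k \<Longrightarrow>
      (\<Sum>k\<in>UNIV. demand_integral c k (P $ k)) \<le> Cd + v / (2 * S) * (\<Sum>k\<in>UNIV. P $ k)"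
    using sum_demand_integral_le_small_linear[OF assms(2), of "v / (2 * S)"] v(1) S by auto
  define C0 where "C0 = (\<Sum>i\<in>UNIV. W i 0 + (PE * Eb $ i + W i (Lb $ i)))"
  have bound: "v / 2 * (P $ k / pbar $ k) - (C0 + Cd) \<le> potential c P" if P: "\<forall>j. c \<le> P $ j" for P k
  proof -
    have Pp: "P \<in> pos_orthant" using P assms(2) by (auto simp: pos_orthant_def intro: less_le_trans)
    define s where "s = Max (range (\<lambda>j. P $ j / pbar $ j))"
    have "s \<in> range (\<lambda>j. P $ j / pbar $ j)" unfolding s_def by (rule Max_in) simp_all
    then obtain k0 where "s = P $ k0 / pbar $ k0" by blast
    then have k0: "P $ k0 = s * pbar $ k0" using vb(4)[rule_format, of k0] by simp
    have s_ge: "P $ j / pbar $ j \<le> s" for j unfolding s_def by simp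
    then have le: "\<forall>j. P $ j \<le> s * pbar $ j" using vb(4) by (simp add: pos_divide_le_eq)
    have "s * v - C0 \<le> (\<Sum>i\<in>UNIV. max_profit i P)"
      unfolding C0_def by (rule sum_max_profit_ge_viable[OF vb(1-3) pbar v(2) Pp le k0])
    moreover have "(\<Sum>j\<in>UNIV. P $ j) \<le> s * S"
      unfolding S_def sum_distrib_left using le by (intro sum_mono) simp
    then have "v / (2 * S) * (\<Sum>j\<in>UNIV. P $ j) \<le> s * v / 2"
      using v(1) S by (simp add: field_simps)
    moreover have "P $ k / pbar $ k * (v / 2) \<le> s * (v / 2)"
      using s_ge[of k] v(1) by (intro mult_right_mono) simp_all
    then have "v / 2 * (P $ k / pbar $ k) \<le> s * v / 2" by (simp add: mult.commute)
    ultimately show ?thesis using Cd[OF P] unfolding potential_def by linarith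
  qed
  show ?thesis by (rule that[OF pbar, of "v / 2" "C0 + Cd"]) (use v(1) bound in auto)
qed

lemma potential_large_at_high_prices:
  assumes "market_viability F \<or> unbounded_external_supply D" "0 < c"
  obtains hi where "\<forall>k. M < hi $ k"
    "\<And>P k. \<forall>j. c \<le> P $ j \<Longrightarrow> hi $ k \<le> P $ k \<Longrightarrow> V < potential c P"
proof -
  obtain pbar \<kappa> C where pbar: "pbar \<in> pos_orthant" and \<kappa>: "0 < \<kappa>"
    and C: "\<And>P k. \<forall>j. c \<le> P $ j \<Longrightarrow> \<kappa> * (P $ k / pbar $ k) - C \<le> potential c P"
  proof (cases "unbounded_external_supply D")
    case True
    obtain C where "\<And>P k. \<forall>j. c \<le> P $ j \<Longrightarrow> P $ k - C \<le> potential c P"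
      using potential_coercive_external_supply[OF True assms(2)] by blast
    then show ?thesis using that[of "\<chi> _. 1" 1 C] by (simp add: pos_orthant_def)
  next
    case False
    then have "market_viability F" using assms(1) by blast
    then show ?thesis using potential_coercive_viability[OF _ assms(2)] that by blast
  qed
  define \<beta> where "\<beta> = (V + C + 1) / \<kappa>"
  show ?thesis
  proof
    show "\<forall>k. M < (\<chi> k. max (M + 1) (\<beta> * pbar $ k)) $ k" by (simp add: less_max_iff_disj)
    fix P k assume P: "\<forall>j. c \<le> P $ j" "(\<chi> k. max (M + 1) (\<beta> * pbar $ k)) $ k \<le> P $ k"
    have "\<beta> \<le> P $ k / pbar $ k" using P(2) pbar by (simp add: pos_orthant_def pos_le_divide_eq)
    then have "V + C + 1 \<le> \<kappa> * (P $ k / pbar $ k)"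
      using \<kappa> by (simp add: \<beta>_def pos_divide_le_eq mult.commute)
    then show "V < potential c P" using C[OF P(1), of k] by linarith
  qed
qed

section \<open>Existence of an equilibrium\<close>

lemma inputs_bounded_by_output:
  assumes P: "0 < P $ k" "P $ k \<le> 1" "\<forall>j. P $ k \<le> 2 * P $ j"
    and x: "(q, E, L) \<in> input_dom" "firm_profit k P (0, 0, 0) \<le> firm_profit k P (q, E, L)"
  shows "(\<Sum>j\<in>UNIV. q $ j) \<le> 2 * F k (q, E, L)" "PE * E \<le> F k (q, E, L)"
    "W k L - W k 0 \<le> F k (q, E, L)"
proof -
  have spent: "(\<Sum>j\<in>UNIV. P $ j * q $ j) + PE * E + (W k L - W k 0) \<le> P $ k * F k (q, E, L)"
    using firm_profit_zero_ge[of P k] P(1) x(2) unfolding firm_profit_Pair by simp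
  have "P $ k / 2 * (\<Sum>j\<in>UNIV. q $ j) \<le> (\<Sum>j\<in>UNIV. P $ j * q $ j)"
    unfolding sum_distrib_left
  proof (intro sum_mono)
    fix j
    have "P $ k * q $ j \<le> (2 * P $ j) * q $ j" using P(3) x(1) by (intro mult_right_mono) simp_all
    then show "P $ k / 2 * q $ j \<le> P $ j * q $ j" by simp
  qed
  moreover have "0 \<le> PE * E" "0 \<le> W k L - W k 0" "0 \<le> P $ k / 2 * (\<Sum>j\<in>UNIV. q $ j)"
    using x(1) PE_pos W_mono[of 0 L k] P(1) by (simp_all add: sum_nonneg)
  moreover have "P $ k * F k (q, E, L) \<le> F k (q, E, L)"
    using P(1,2) F_nonneg[OF x(1)] by (intro mult_left_le_one_le) simp_all
  ultimately have "P $ k * (\<Sum>j\<in>UNIV. q $ j) \<le> P $ k * (2 * F k (q, E, L))"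
    and "PE * E \<le> F k (q, E, L)" "W k L - W k 0 \<le> F k (q, E, L)"
    using spent by (simp_all add: algebra_simps)
  then show "(\<Sum>j\<in>UNIV. q $ j) \<le> 2 * F k (q, E, L)" "PE * E \<le> F k (q, E, L)"
    "W k L - W k 0 \<le> F k (q, E, L)"
    using P(1) by simp_all
qed

lemma supply_bounded_at_low_price_sublinear:
  assumes "prod_assm_a (F k)"
  obtains Fm where "\<And>P x. 0 < P $ k \<Longrightarrow> P $ k \<le> 1 \<Longrightarrow> \<forall>j. P $ k \<le> 2 * P $ j \<Longrightarrow> x \<in> input_dom \<Longrightarrow>
    firm_profit k P (0, 0, 0) \<le> firm_profit k P x \<Longrightarrow> F k x \<le> Fm"
proof -
  obtain m where m: "0 < m" "\<And>L. 0 \<le> L \<Longrightarrow> W k 0 + m * (L - 1) \<le> W k L"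
    using labor_assm_linear_lower_bound[OF labor_assm_W] by blast
  define \<alpha> where "\<alpha> = 2 + 1 / PE + 1 / m"
  have \<alpha>: "0 < \<alpha>" using m PE_pos by (simp add: \<alpha>_def add_pos_pos)
  obtain C where C: "\<And>x. x \<in> input_dom \<Longrightarrow> F k x \<le> 1 / (2 * \<alpha>) * norm x + C"
    using prod_assm_a_affine_bound[OF assms F_nonneg, of "1 / (2 * \<alpha>)"] \<alpha> by auto
  have "F k x \<le> 1 / \<alpha> + 2 * C"
    if P: "0 < P $ k" "P $ k \<le> 1" "\<forall>j. P $ k \<le> 2 * P $ j" and x: "x \<in> input_dom"
      and gain: "firm_profit k P (0, 0, 0) \<le> firm_profit k P x" for P x
  proof -
    obtain q E L where xe: "x = (q, E, L)" by (cases x)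
    note bound = inputs_bounded_by_output[OF P x[unfolded xe] gain[unfolded xe], folded xe]
    have "E \<le> F k x / PE" using bound(2) PE_pos by (simp add: field_simps)
    moreover have "m * (L - 1) \<le> F k x" using m(2)[of L] bound(3) x xe by simp
    then have "L \<le> F k x / m + 1" using m(1) by (simp add: field_simps)
    ultimately have "norm x \<le> 2 * F k x + F k x / PE + (F k x / m + 1)"
      using norm_input_le_sum[of q E L] bound(1) x xe by simp
    also have "\<dots> = \<alpha> * F k x + 1" by (simp add: \<alpha>_def algebra_simps)
    finally have "1 / (2 * \<alpha>) * norm x \<le> 1 / (2 * \<alpha>) * (\<alpha> * F k x + 1)"
      using \<alpha> by (intro mult_left_mono) simp_all
    then have "F k x \<le> F k x / 2 + 1 / (2 * \<alpha>) + C" using C[OF x] \<alpha> by (simp add: field_simps)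
    then show ?thesis by (simp add: field_simps)
  qed
  then show ?thesis using that by blast
qed

lemma supply_bounded_at_low_price_labor_bounded:
  assumes "prod_assm_b (F k)" "growth_assm (W k)"
  obtains Fm where "\<And>P x. 0 < P $ k \<Longrightarrow> P $ k \<le> 1 \<Longrightarrow> \<forall>j. P $ k \<le> 2 * P $ j \<Longrightarrow> x \<in> input_dom \<Longrightarrow>
    firm_profit k P (0, 0, 0) \<le> firm_profit k P x \<Longrightarrow> F k x \<le> Fm"
proof -
  obtain C where C: "0 \<le> C" "\<And>q E L. (q, E, L) \<in> input_dom \<Longrightarrow> F k (q, E, L) \<le> C * L"
    using prod_assm_b_labor_bound[OF assms(1)] by blast
  obtain L0 where L0: "\<And>L. L0 \<le> L \<Longrightarrow> (C + 1) * L \<le> W k L"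
    using growth_assm_eventually_ge_linear[OF assms(2)] by blast
  define L1 where "L1 = max L0 (W k 0)"
  have "F k x \<le> C * L1"
    if P: "0 < P $ k" "P $ k \<le> 1" "\<forall>j. P $ k \<le> 2 * P $ j" and x: "x \<in> input_dom"
      and gain: "firm_profit k P (0, 0, 0) \<le> firm_profit k P x" for P x
  proof -
    obtain q E L where xe: "x = (q, E, L)" by (cases x)
    have FL: "F k x \<le> C * L" using C(2) x xe by simp
    have WL: "W k L - W k 0 \<le> F k x"
      using inputs_bounded_by_output(3)[OF P x[unfolded xe] gain[unfolded xe]] xe by simp
    have "L \<le> L1"
    proof (rule ccontr)
      assume "\<not> L \<le> L1"
      then have "(C + 1) * L \<le> W k L" "W k 0 < L" using L0 by (simp_all add: L1_def)
      then show False using FL WL by (simp add: algebra_simps)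
    qed
    then show ?thesis using FL C(1) by (meson mult_left_mono order_trans)
  qed
  then show ?thesis using that by blast
qed

lemma excess_demand_at_low_price:
  obtains \<epsilon> where "0 < \<epsilon>"
    "\<And>P X. P \<in> pos_orthant \<Longrightarrow> P $ k < \<epsilon> \<Longrightarrow> \<forall>j. P $ k \<le> 2 * P $ j \<Longrightarrow> X \<in> optimal_allocs P \<Longrightarrow>
      net_supply X $ k < D k (P $ k)"
proof -
  obtain Fm where Fm: "\<And>P x. 0 < P $ k \<Longrightarrow> P $ k \<le> 1 \<Longrightarrow> \<forall>j. P $ k \<le> 2 * P $ j \<Longrightarrow>
      x \<in> input_dom \<Longrightarrow> firm_profit k P (0, 0, 0) \<le> firm_profit k P x \<Longrightarrow> F k x \<le> Fm"
  proof (cases "prod_assm_a (F k)")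
    case True
    then show ?thesis using supply_bounded_at_low_price_sublinear that by blast
  next
    case False
    then show ?thesis
      using prod_labor[of k] supply_bounded_at_low_price_labor_bounded that by blast
  qed
  have "eventually (\<lambda>p. Fm < D k p) (at_right 0)"
    using demand[of k] unfolding demand_assm_def filterlim_at_top_dense by blast
  then obtain \<epsilon> where \<epsilon>: "0 < \<epsilon>" "\<And>p. 0 < p \<Longrightarrow> p < \<epsilon> \<Longrightarrow> Fm < D k p"
    unfolding eventually_at_right[OF zero_less_one] by blast
  have "net_supply X $ k < D k (P $ k)"
    if P: "P \<in> pos_orthant" "P $ k < min \<epsilon> 1" "\<forall>j. P $ k \<le> 2 * P $ j"
      and X: "X \<in> optimal_allocs P" for P X
  proof -
    have Pk: "0 < P $ k" using P(1) by (simp add: pos_orthant_def)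
    have "0 \<le> fst X $ i $ k" for i using optimal_allocsD(1)[OF X, of i] by (simp add: firm_inputs_def)
    then have "net_supply X $ k \<le> F k (firm_inputs X k)" by (simp add: net_supply_def sum_nonneg)
    also have "\<dots> \<le> Fm"
      using Fm[OF Pk _ P(3) optimal_allocsD(1)[OF X]] optimal_allocsD(2)[OF X, of "(0, 0, 0)"] P(2)
      by simp
    also have "\<dots> < D k (P $ k)" using \<epsilon>(2) Pk P(2) by simp
    finally show ?thesis .
  qed
  then show ?thesis using that[of "min \<epsilon> 1"] \<epsilon>(1) by simp
qed

lemma market_demand_tendsto:
  assumes "Pn \<longlonglongrightarrow> P" "P \<in> pos_orthant"
  shows "(\<lambda>n. market_demand (Pn n)) \<longlonglongrightarrow> market_demand P"
  unfolding market_demand_def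
proof (rule tendsto_vec_lambda)
  fix k
  have "isCont (D k) (P $ k)"
    using D_cont[of k] assms(2) continuous_on_eq_continuous_at[OF open_greaterThan, of 0 "D k"]
    by (simp add: pos_orthant_def)
  then show "(\<lambda>n. D k (Pn n $ k)) \<longlonglongrightarrow> D k (P $ k)"
    using tendsto_vec_nth[OF assms(1)] by (rule isCont_tendsto_compose)
qed

context
  fixes c \<delta> :: real and Ps :: "real^'n"
  assumes c_pos: "0 < c" and \<delta>_pos: "0 < \<delta>" and Ps_ge: "\<forall>k. c + \<delta> \<le> Ps $ k"
    and Ps_local_min: "\<And>P. \<forall>k. \<bar>P $ k - Ps $ k\<bar> < \<delta> \<Longrightarrow> potential c Ps \<le> potential c P"
begin

lemma near_Ps_ge_c:
  assumes "\<forall>k. \<bar>P $ k - Ps $ k\<bar> < \<delta>"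
  shows "c \<le> P $ k"
  using assms[rule_format, of k] Ps_ge[rule_format, of k] by (simp add: abs_less_iff)

lemma near_Ps_pos: "\<forall>k. \<bar>P $ k - Ps $ k\<bar> < \<delta> \<Longrightarrow> P \<in> pos_orthant"
  using near_Ps_ge_c c_pos by (auto simp: pos_orthant_def intro: less_le_trans)

lemma Ps_pos: "Ps \<in> pos_orthant"
  using near_Ps_pos \<delta>_pos by simp

lemma local_min_demand_le_supply:
  assumes "0 < t" "\<forall>k. \<bar>t * u $ k\<bar> < \<delta>" "X \<in> optimal_allocs (Ps + t *\<^sub>R u)"
  shows "u \<bullet> market_demand (Ps + t *\<^sub>R u) \<le> u \<bullet> net_supply X"
proof -
  have near: "\<forall>k. \<bar>(Ps + t *\<^sub>R u) $ k - Ps $ k\<bar> < \<delta>" using assms(2) by simp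
  have "potential c Ps \<le> potential c (Ps + t *\<^sub>R u)" using Ps_local_min[OF near] .
  also have "potential c (Ps + t *\<^sub>R u) - potential c Ps
      \<le> t * (u \<bullet> (net_supply X - market_demand (Ps + t *\<^sub>R u)))"
    using potential_diff_le[OF Ps_pos assms(3) c_pos] near_Ps_ge_c[OF near] near_Ps_ge_c \<delta>_pos
    by simp
  finally show ?thesis using assms(1) by (simp add: zero_le_mult_iff inner_diff_right)
qed

lemma demand_le_net_supply_in_direction:
  obtains Xb where "Xb \<in> optimal_allocs Ps" "u \<bullet> market_demand Ps \<le> u \<bullet> net_supply Xb"
proof -
  obtain t where t: "\<And>n. 0 < t n" "t \<longlonglongrightarrow> 0" "\<And>n. \<forall>k. \<bar>t n * u $ k\<bar> < \<delta>"
    using scaled_null_sequence[OF \<delta>_pos] by blast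
  define Pn where "Pn n = Ps + t n *\<^sub>R u" for n
  have near: "\<forall>k. \<bar>Pn n $ k - Ps $ k\<bar> < \<delta>" for n using t(3)[of n] by (simp add: Pn_def)
  have "\<forall>n. \<exists>X. X \<in> optimal_allocs (Pn n)"
    using optimal_allocs_nonempty[OF near_Ps_pos[OF near]] by metis
  then obtain Xn where Xn: "\<And>n. Xn n \<in> optimal_allocs (Pn n)" by metis
  have ineq: "u \<bullet> market_demand (Pn n) \<le> u \<bullet> net_supply (Xn n)" for n
    using local_min_demand_le_supply[OF t(1) t(3) Xn[unfolded Pn_def]] by (simp add: Pn_def)
  have "(\<lambda>n. Ps + t n *\<^sub>R u) \<longlonglongrightarrow> Ps + 0 *\<^sub>R u" using t(2) by (intro tendsto_intros)
  then have Pn_lim: "Pn \<longlonglongrightarrow> Ps" by (simp add: Pn_def[abs_def])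
  define B where "B = Max (range (\<lambda>k. Ps $ k)) + \<delta>"
  have "c \<le> Pn n $ k \<and> Pn n $ k \<le> B" for n k
  proof -
    have "Ps $ k \<le> Max (range (\<lambda>k. Ps $ k))" by simp
    then show ?thesis
      using near_Ps_ge_c[OF near[of n], of k] near[of n, rule_format, of k]
      unfolding B_def abs_less_iff by linarith
  qed
  then have "bounded (range Xn)" using optimal_allocs_bounded[OF c_pos] Xn by blast
  then obtain r Xb where r: "strict_mono r" "Xb \<in> optimal_allocs Ps"
      "(\<lambda>n. net_supply (Xn (r n))) \<longlonglongrightarrow> net_supply Xb"
    using optimal_allocs_subseq_limit[OF Pn_lim Ps_pos Xn] by blast
  have "(\<lambda>n. u \<bullet> market_demand (Pn (r n))) \<longlonglongrightarrow> u \<bullet> market_demand Ps"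
    using market_demand_tendsto[OF LIMSEQ_subseq_LIMSEQ[OF Pn_lim r(1)] Ps_pos]
    by (intro tendsto_intros) (simp add: comp_def)
  moreover have "(\<lambda>n. u \<bullet> net_supply (Xn (r n))) \<longlonglongrightarrow> u \<bullet> net_supply Xb"
    using r(3) by (intro tendsto_intros)
  ultimately have "u \<bullet> market_demand Ps \<le> u \<bullet> net_supply Xb"
    using ineq by (intro LIMSEQ_le) auto
  then show ?thesis using that r(2) by blast
qed

lemma market_clears_at_local_min:
  obtains X where "X \<in> optimal_allocs Ps" "net_supply X = market_demand Ps"
proof -
  have "market_demand Ps \<in> net_supply ` optimal_allocs Ps"
  proof (rule ccontr)
    assume "market_demand Ps \<notin> net_supply ` optimal_allocs Ps"
    then obtain w b where wb: "w \<bullet> market_demand Ps < b" "\<forall>s\<in>net_supply ` optimal_allocs Ps. b < w \<bullet> s"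
      using separating_hyperplane_closed_point[OF convex_net_supply_optimal[OF Ps_pos]
          closed_net_supply_optimal[OF Ps_pos]] by blast
    obtain Xb where "Xb \<in> optimal_allocs Ps" "(- w) \<bullet> market_demand Ps \<le> (- w) \<bullet> net_supply Xb"
      by (rule demand_le_net_supply_in_direction)
    then have "w \<bullet> net_supply Xb \<le> w \<bullet> market_demand Ps" "b < w \<bullet> net_supply Xb"
      using wb(2) by auto
    then show False using wb(1) by linarith
  qed
  then obtain X where "X \<in> optimal_allocs Ps" "market_demand Ps = net_supply X" by blast
  then show ?thesis using that by simp
qed

end

lemma potential_min_on_box:
  assumes "0 < c" "c \<le> a" "\<forall>k. a \<le> hi $ k"
  obtains Ps where "\<forall>k. a \<le> Ps $ k \<and> Ps $ k \<le> hi $ k"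
    "\<And>P. \<forall>k. a \<le> P $ k \<and> P $ k \<le> hi $ k \<Longrightarrow> potential c Ps \<le> potential c P"
proof -
  define K where "K = cbox (\<chi> _. a) hi"
  have inK: "P \<in> K \<longleftrightarrow> (\<forall>k. a \<le> P $ k \<and> P $ k \<le> hi $ k)" for P
    by (simp add: K_def mem_box_cart)
  have K_pos: "K \<subseteq> pos_orthant"
    using assms(1,2) by (auto simp: inK pos_orthant_def intro: less_le_trans)
  have K_ge_c: "c \<le> P $ k" "P $ k \<le> hi $ k" if "P \<in> K" for P k
    using that assms(2) unfolding inK by (meson order_trans)+
  have "continuous_on K (potential c)"
    unfolding potential_def
  proof (intro continuous_on_diff continuous_on_sum)
    show "continuous_on K (max_profit i)" for i
      by (rule continuous_on_subset[OF continuous_on_max_profit K_pos])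
    show "continuous_on K (\<lambda>P. demand_integral c k (P $ k))" for k
      by (rule continuous_on_compose2[OF continuous_on_demand_integral[OF assms(1), of "hi $ k" k]])
        (use K_ge_c in \<open>auto intro: continuous_intros\<close>)
  qed
  moreover have "K \<noteq> {}" using assms(3) inK[of "\<chi> _. a"] by auto
  ultimately obtain Ps where "Ps \<in> K" "\<And>P. P \<in> K \<Longrightarrow> potential c Ps \<le> potential c P"
    using continuous_attains_inf[OF compact_cbox[of "\<chi> _. a" hi, folded K_def]] by blast
  then show ?thesis using that inK by blast
qed

lemma local_min_of_interior_box_min:
  assumes "c \<le> a" "\<forall>k. a < Ps $ k \<and> Ps $ k < hi $ k"
    and "\<And>P. \<forall>k. a \<le> P $ k \<and> P $ k \<le> hi $ k \<Longrightarrow> potential c Ps \<le> potential c P"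
  obtains \<delta> where "0 < \<delta>" "\<forall>k. c + \<delta> \<le> Ps $ k"
    "\<And>P. \<forall>k. \<bar>P $ k - Ps $ k\<bar> < \<delta> \<Longrightarrow> potential c Ps \<le> potential c P"
proof -
  define \<delta> where "\<delta> = Min (range (\<lambda>k. min (Ps $ k - a) (hi $ k - Ps $ k)))"
  have "\<delta> \<le> min (Ps $ k - a) (hi $ k - Ps $ k)" for k unfolding \<delta>_def by (rule Min_le) simp_all
  then have gap: "\<delta> \<le> Ps $ k - a" "\<delta> \<le> hi $ k - Ps $ k" for k by simp_all
  have "0 < \<delta>" using assms(2) by (simp add: \<delta>_def)
  moreover have "\<forall>k. c + \<delta> \<le> Ps $ k" using gap(1) assms(1) by (smt (verit))
  moreover have "potential c Ps \<le> potential c P" if "\<forall>k. \<bar>P $ k - Ps $ k\<bar> < \<delta>" for P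
    using assms(3) gap that by (smt (verit))
  ultimately show ?thesis using that by blast
qed

lemma potential_decreases_along_excess_demand:
  assumes "P \<in> pos_orthant" "0 < c" "\<forall>j. c \<le> P $ j" "0 < t"
    and X: "X \<in> optimal_allocs (P + axis k t)" "net_supply X $ k < D k (P $ k + t)"
  shows "potential c (P + axis k t) < potential c P"
proof -
  have "c \<le> (P + axis k t) $ j" for j
    using assms(3)[rule_format, of j] assms(4) by (cases "j = k") (simp_all add: axis_def)
  then have "\<forall>j. c \<le> P $ j \<and> c \<le> (P + axis k t) $ j" using assms(3) by blast
  then have "potential c (P + axis k t) - potential c P \<le> t * (net_supply X $ k - D k (P $ k + t))"
    using potential_diff_le[OF assms(1) X(1) assms(2)] by (simp add: inner_axis' market_demand_def)
  also have "\<dots> < 0" using assms(4) X(2) by (simp add: mult_pos_neg)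
  finally show ?thesis by simp
qed

lemma box_min_above_low_price:
  assumes c: "0 < c" "c \<le> a" and "a < hi $ k" "2 * a < \<epsilon>"
    and box: "\<forall>j. a \<le> Ps $ j \<and> Ps $ j \<le> hi $ j"
    and min: "\<And>P. \<forall>j. a \<le> P $ j \<and> P $ j \<le> hi $ j \<Longrightarrow> potential c Ps \<le> potential c P"
    and excess: "\<And>P X. P \<in> pos_orthant \<Longrightarrow> P $ k < \<epsilon> \<Longrightarrow> \<forall>j. P $ k \<le> 2 * P $ j \<Longrightarrow>
      X \<in> optimal_allocs P \<Longrightarrow> net_supply X $ k < D k (P $ k)"
  shows "a < Ps $ k"
proof (rule ccontr)
  assume "\<not> a < Ps $ k"
  then have Pa: "Ps $ k = a" using box by (meson order.antisym not_less)
  have Ps_ge_c: "\<forall>j. c \<le> Ps $ j" using box c(2) by (meson order_trans)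
  have Ps_pos: "Ps \<in> pos_orthant" using Ps_ge_c c(1) by (auto simp: pos_orthant_def intro: less_le_trans)
  define t where "t = min a (hi $ k - a)"
  have t: "0 < t" "t \<le> a" "a + t \<le> hi $ k" using c assms(3) by (auto simp: t_def)
  define P' where "P' = Ps + axis k t"
  have P'_box: "\<forall>j. a \<le> P' $ j \<and> P' $ j \<le> hi $ j" using box t Pa by (auto simp: P'_def axis_def)
  have P'_pos: "P' \<in> pos_orthant" using P'_box c by (auto simp: pos_orthant_def intro: less_le_trans)
  obtain X where X: "X \<in> optimal_allocs P'" using optimal_allocs_nonempty[OF P'_pos] by blast
  have P'k: "P' $ k = a + t" using Pa by (simp add: P'_def)
  have "P' $ k \<le> 2 * P' $ j" for j using P'_box[rule_format, of j] P'k t(2) by linarith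
  moreover have "P' $ k < \<epsilon>" using P'k t(2) assms(4) by linarith
  ultimately have "net_supply X $ k < D k (Ps $ k + t)" using excess[OF P'_pos _ _ X] P'k Pa by auto
  then have "potential c P' < potential c Ps"
    unfolding P'_def
    by (rule potential_decreases_along_excess_demand[OF Ps_pos c(1) Ps_ge_c t(1) X[unfolded P'_def]])
  then show False using min[OF P'_box] by simp
qed

lemma equilibrium_exists:
  assumes "market_viability F \<or> unbounded_external_supply D"
  obtains P X where "P \<in> pos_orthant" "X \<in> optimal_allocs P" "net_supply X = market_demand P"
proof -
  have "\<forall>k. \<exists>\<epsilon>>0. \<forall>P X. P \<in> pos_orthant \<longrightarrow> P $ k < \<epsilon> \<longrightarrow> (\<forall>j. P $ k \<le> 2 * P $ j) \<longrightarrow>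
      X \<in> optimal_allocs P \<longrightarrow> net_supply X $ k < D k (P $ k)"
    using excess_demand_at_low_price by metis
  then obtain \<epsilon> where \<epsilon>: "\<And>k. 0 < \<epsilon> k" "\<And>k P X. P \<in> pos_orthant \<Longrightarrow> P $ k < \<epsilon> k \<Longrightarrow>
      \<forall>j. P $ k \<le> 2 * P $ j \<Longrightarrow> X \<in> optimal_allocs P \<Longrightarrow> net_supply X $ k < D k (P $ k)"
    by metis
  (* Below the price 2 a every good is in excess demand, and on the upper faces of the box
     [a, hi] the potential exceeds its value at the lower corner. *)
  define a where "a = Min (range \<epsilon>) / 3"
  have a: "0 < a" "2 * a < \<epsilon> k" for k
  proof -
    have "0 < Min (range \<epsilon>)" "Min (range \<epsilon>) \<le> \<epsilon> k" using \<epsilon>(1) by simp_all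
    then show "0 < a" "2 * a < \<epsilon> k" unfolding a_def by linarith+
  qed
  define c where "c = a / 2"
  have c: "0 < c" "c \<le> a" using a(1) by (simp_all add: c_def)
  obtain hi where hi: "\<forall>k. a < hi $ k"
    and high: "\<And>P k. \<forall>j. c \<le> P $ j \<Longrightarrow> hi $ k \<le> P $ k \<Longrightarrow> potential c (\<chi> _. a) < potential c P"
    using potential_large_at_high_prices[OF assms c(1), where M = a and V = "potential c (\<chi> _. a)"]
    by blast
  obtain Ps where box: "\<forall>k. a \<le> Ps $ k \<and> Ps $ k \<le> hi $ k"
    and min: "\<And>P. \<forall>k. a \<le> P $ k \<and> P $ k \<le> hi $ k \<Longrightarrow> potential c Ps \<le> potential c P"
    using potential_min_on_box[OF c] hi less_imp_le by blast
  have "Ps $ k < hi $ k" for k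
  proof (rule ccontr)
    assume "\<not> Ps $ k < hi $ k"
    moreover have "\<forall>j. c \<le> Ps $ j" using box c(2) by (meson order_trans)
    ultimately have "potential c (\<chi> _. a) < potential c Ps" using high[of Ps k] by simp
    moreover have "potential c Ps \<le> potential c (\<chi> _. a)" using min hi by (simp add: less_imp_le)
    ultimately show False by simp
  qed
  moreover have "a < Ps $ k" for k
    by (rule box_min_above_low_price[OF c hi[rule_format] a(2) box min \<epsilon>(2)])
  ultimately obtain \<delta> where \<delta>: "0 < \<delta>" "\<forall>k. c + \<delta> \<le> Ps $ k"
    "\<And>P. \<forall>k. \<bar>P $ k - Ps $ k\<bar> < \<delta> \<Longrightarrow> potential c Ps \<le> potential c P"
    using local_min_of_interior_box_min[OF c(2) _ min] by blast
  obtain X where "X \<in> optimal_allocs Ps" "net_supply X = market_demand Ps"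
    using market_clears_at_local_min[OF c(1) \<delta>] by blast
  moreover have "Ps \<in> pos_orthant" using box a(1) by (auto simp: pos_orthant_def intro: less_le_trans)
  ultimately show ?thesis using that by blast
qed

section \<open>Competitive equilibria\<close>

lemma competitive_equilibrium_iff:
  "competitive_equilibrium F W D PE P Q E L \<longleftrightarrow>
    (\<forall>i. 0 \<le> P $ i) \<and> (Q, E, L) \<in> optimal_allocs P \<and> net_supply (Q, E, L) = market_demand P"
proof -
  have dom: "(\<forall>i. firm_inputs (Q, E, L) i \<in> input_dom) \<longleftrightarrow>
      (\<forall>i j. 0 \<le> Q $ i $ j) \<and> (\<forall>i. 0 \<le> E $ i) \<and> (\<forall>i. 0 \<le> L $ i)"
    by (auto simp: firm_inputs_def)
  have opt: "(\<forall>i. \<forall>y\<in>input_dom. firm_profit i P y \<le> firm_profit i P (firm_inputs (Q, E, L) i)) \<longleftrightarrow>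
      (\<forall>i q E' L'. (q, E', L') \<in> input_dom \<longrightarrow>
        profit F W i P PE q E' L' \<le> profit F W i P PE (Q $ i) (E $ i) (L $ i))"
    by (simp add: profit_eq_firm_profit firm_inputs_def Ball_def split_paired_All)
  have clear: "net_supply (Q, E, L) = market_demand P \<longleftrightarrow>
      (\<forall>i. F i (Q $ i, E $ i, L $ i) = D i (P $ i) + (\<Sum>j\<in>UNIV. Q $ j $ i))"
    by (auto simp: net_supply_def market_demand_def vec_eq_iff firm_inputs_def algebra_simps)
  show ?thesis
    unfolding competitive_equilibrium_def optimal_allocs_def mem_Collect_eq all_conj_distrib
      dom opt clear by blast
qed

lemma competitive_equilibrium_exists:
  assumes "market_viability F \<or> unbounded_external_supply D"
  shows "\<exists>P Q E L. (\<forall>i. 0 < P $ i) \<and> competitive_equilibrium F W D PE P Q E L"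
proof -
  obtain P Q E L where "P \<in> pos_orthant" "(Q, E, L) \<in> optimal_allocs P"
      "net_supply (Q, E, L) = market_demand P"
    using equilibrium_exists[OF assms] by (metis prod_cases3)
  then have "(\<forall>i. 0 < P $ i) \<and> competitive_equilibrium F W D PE P Q E L"
    by (auto simp: competitive_equilibrium_iff pos_orthant_def less_imp_le)
  then show ?thesis by blast
qed

lemma equilibrium_price_unique:
  assumes "P \<in> pos_orthant" "X \<in> optimal_allocs P" "net_supply X = market_demand P"
    and "P' \<in> pos_orthant" "X' \<in> optimal_allocs P'" "net_supply X' = market_demand P'"
  shows "P = P'"
proof (rule ccontr)
  define gap where "gap k = (P' $ k - P $ k) * (D k (P' $ k) - D k (P $ k))" for k
  have "(P' - P) \<bullet> market_demand P \<le> (P' - P) \<bullet> market_demand P'"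
    using net_supply_monotone[OF assms(2,5)] assms(3,6) by simp
  then have "0 \<le> (\<Sum>k\<in>UNIV. gap k)"
    by (simp add: gap_def inner_vec_def market_demand_def algebra_simps sum_subtractf sum.distrib)
  have gap_neg: "gap k < 0" if "P' $ k \<noteq> P $ k" for k
  proof (cases "P $ k < P' $ k")
    case True
    then show ?thesis
      using D_less[of "P $ k" "P' $ k" k] assms(1) by (simp add: gap_def pos_orthant_def mult_pos_neg)
  next
    case False
    then show ?thesis using D_less[of "P' $ k" "P $ k" k] assms(4) that
      by (simp add: gap_def pos_orthant_def mult_neg_pos)
  qed
  have gap_le: "gap k \<le> 0" for k
    using gap_neg[of k] by (cases "P' $ k = P $ k") (auto simp: gap_def)
  assume "P \<noteq> P'"
  then obtain k where "P' $ k \<noteq> P $ k" by (metis vec_eq_iff)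
  then have "(\<Sum>k\<in>UNIV. gap k) < (\<Sum>k\<in>(UNIV :: 'n set). 0)"
    using gap_neg gap_le by (intro sum_strict_mono_ex1) auto
  then show False using \<open>0 \<le> (\<Sum>k\<in>UNIV. gap k)\<close> by simp
qed

lemma maximizer_unique:
  assumes "strictly_concave_on input_dom (F i)" "P \<in> pos_orthant"
    and x: "x \<in> input_dom" "\<And>w. w \<in> input_dom \<Longrightarrow> firm_profit i P w \<le> firm_profit i P x"
    and y: "y \<in> input_dom" "\<And>w. w \<in> input_dom \<Longrightarrow> firm_profit i P w \<le> firm_profit i P y"
  shows "x = y"
proof (rule ccontr)
  assume "x \<noteq> y"
  then have "\<forall>t. 0 < t \<and> t < 1 \<longrightarrow>
      (1 - t) * F i x + t * F i y < F i ((1 - t) *\<^sub>R x + t *\<^sub>R y)"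
    using assms(1) x(1) y(1) unfolding strictly_concave_on_def by blast
  from this[rule_format, of "1/2"]
  have "(1 - 1/2) * F i x + 1/2 * F i y < F i ((1 - 1/2) *\<^sub>R x + (1/2) *\<^sub>R y)"
    by simp
  moreover have "F i ((1/2) *\<^sub>R x + (1/2) *\<^sub>R y) = 1/2 * F i x + 1/2 * F i y"
    by (rule optimal_inputs_convex_comb(3)[OF assms(2) x y]) simp_all
  ultimately show False by simp
qed

lemma equilibrium_allocation_unique:
  assumes "\<forall>i. strictly_concave_on input_dom (F i)" "P \<in> pos_orthant"
    and "X \<in> optimal_allocs P" "Y \<in> optimal_allocs P"
  shows "X = Y"
proof -
  have "firm_inputs X i = firm_inputs Y i" for i
    using maximizer_unique[OF assms(1)[rule_format] assms(2)] optimal_allocsD[OF assms(3)]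
      optimal_allocsD[OF assms(4)] by blast
  then show ?thesis using firm_inputs_eq_iff by blast
qed

lemma competitive_equilibrium_unique:
  assumes "\<forall>i. 0 < P $ i" "competitive_equilibrium F W D PE P Q E L"
    and "\<forall>i. 0 < P' $ i" "competitive_equilibrium F W D PE P' Q' E' L'"
  shows "P = P'"
    and "\<forall>i. strictly_concave_on input_dom (F i) \<Longrightarrow> Q = Q' \<and> E = E' \<and> L = L'"
proof -
  have eq: "P \<in> pos_orthant" "(Q, E, L) \<in> optimal_allocs P" "net_supply (Q, E, L) = market_demand P"
    "P' \<in> pos_orthant" "(Q', E', L') \<in> optimal_allocs P'" "net_supply (Q', E', L') = market_demand P'"
    using assms by (simp_all add: competitive_equilibrium_iff pos_orthant_def)
  show "P = P'" using eq by (rule equilibrium_price_unique)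
  then show "Q = Q' \<and> E = E' \<and> L = L'" if "\<forall>i. strictly_concave_on input_dom (F i)"
    using equilibrium_allocation_unique[OF that] eq by blast
qed

end

theorem theorem3p1:
  fixes F :: "'n::finite \<Rightarrow> 'n input \<Rightarrow> real"
    and W :: "'n \<Rightarrow> real \<Rightarrow> real"
    and D :: "'n \<Rightarrow> real \<Rightarrow> real"
    and PE :: real
  assumes PE_pos: "0 < PE"
    and F_nonneg: "\<And>i x. x \<in> input_dom \<Longrightarrow> 0 \<le> F i x"
    and W_pos: "\<And>i L. 0 \<le> L \<Longrightarrow> 0 < W i L"
    and prod_labor: "\<And>i. (prod_assm_a (F i) \<and> labor_assm (W i)) \<or>
                         (prod_assm_b (F i) \<and> labor_assm (W i) \<and> growth_assm (W i))"
    and demand: "\<And>i. demand_assm (D i)"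
    and viab: "market_viability F \<or> unbounded_external_supply D"
  shows "(\<exists>P Q E L. (\<forall>i. 0 < P $ i) \<and> competitive_equilibrium F W D PE P Q E L)
    \<and> (\<forall>P Q E L P' Q' E' L'.
          (\<forall>i. 0 < P $ i) \<and> competitive_equilibrium F W D PE P Q E L \<and>
          (\<forall>i. 0 < P' $ i) \<and> competitive_equilibrium F W D PE P' Q' E' L' \<longrightarrow> P = P')
    \<and> ((\<forall>i. strictly_concave_on input_dom (F i) \<and> strictly_convex_on {0..} (W i)) \<longrightarrow>
        (\<forall>P Q E L P' Q' E' L'.
          (\<forall>i. 0 < P $ i) \<and> competitive_equilibrium F W D PE P Q E L \<and>
          (\<forall>i. 0 < P' $ i) \<and> competitive_equilibrium F W D PE P' Q' E' L' \<longrightarrow>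
          P = P' \<and> Q = Q' \<and> E = E' \<and> L = L'))"
proof -
  interpret economy F W D PE
    using PE_pos F_nonneg W_pos prod_labor demand by unfold_locales
  have "P = P' \<and> ((\<forall>i. strictly_concave_on input_dom (F i)) \<longrightarrow> Q = Q' \<and> E = E' \<and> L = L')"
    if "(\<forall>i. 0 < P $ i) \<and> competitive_equilibrium F W D PE P Q E L \<and>
      (\<forall>i. 0 < P' $ i) \<and> competitive_equilibrium F W D PE P' Q' E' L'" for P Q E L P' Q' E' L'
    using competitive_equilibrium_unique that by blast
  then show ?thesis using competitive_equilibrium_exists[OF viab] by blast
qed

end
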